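(* Suppose $\|\widehat\theta_t-\theta^*\|_{\Sigma_t}\le\beta_t$ for all $t\in[T]$ (with $\|\theta^*\|_2\le L_\theta$), and let $\lambda\ge L_\varphi^2$. Then $\sum_{k=1}^{K_T}\sum_{t=t_k}^{t_{k+1}-1}B^{1,t_k}_{s_t,a_t}\le\beta_T\Big(\big(\tfrac{32\beta_T}{\kappa}+\tfrac{128\sqrt2L_\varphi\eta}{\kappa\sqrt\lambda}\big)d\log\big(1+\tfrac{T\mathcal UL_\varphi^2}{\lambda d}\big)+2\sqrt{dT\log\big(1+\tfrac{T\mathcal UL_\varphi^2}{\lambda d}\big)}\Big)$.
   Context: Setting: MNL model with finite $\mathcal S,\mathcal A$, reachable sets $\mathcal S_{s,a}$, $\mathcal U=\max|\mathcal S_{s,a}|$, features $\varphi$, $p(s'\mid s,a,\theta)=\exp(\varphi(s,a,s')^\top\theta)/\sum_{s''\in\mathcal S_{s,a}}\exp(\varphi(s,a,s'')^\top\theta)$, true $\theta^*$; assumptions (A1) $\|\varphi\|_2\le L_\varphi$, $\|\theta^*\|_2\le L_\theta$, $\Theta=\{\|\theta\|_2\le L_\theta\}$; (A2) $\inf_{\theta\in\Theta}p(s'\mid s_t,a_t,\theta)p(s''\mid s_t,a_t,\theta)\ge\kappa\in(0,1)$ for all $t$, $s',s''\in\mathcal S_{s_t,a_t}$; (A3) each $\mathcal S_{s,a}$ has $s'$ with $\varphi(s,a,s')=0$. The trajectory $(s_t,a_t)_{t\le T}$ is generated by \texttt{UCMNLK}, which uses the online estimator ($\ell_t(\theta)=-\sum_{s'\in\mathcal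 S_{s_t,a_t}}\mathbf1\{s_{t+1}=s'\}\log p(s'\mid s_t,a_t,\theta)$, $\widehat\theta_1=0$, $\Sigma_1=\lambda I_d$, $\widehat\Sigma_t=\Sigma_t+\eta\nabla^2\ell_t(\widehat\theta_t)$, $\widehat\theta_{t+1}=\arg\min_{\theta\in\Theta}\{\nabla\ell_t(\widehat\theta_t)^\top(\theta-\widehat\theta_t)+\frac1{2\eta}\|\theta-\widehat\theta_t\|^2_{\widehat\Sigma_t}\}$, $\Sigma_{t+1}=\Sigma_t+\nabla^2\ell_t(\widehat\theta_{t+1})$, step size $\eta>0$) and splits time into episodes $k=1,\dots,K_T$ starting at $t_k$ ($t_1=1$, $t_{K_T+1}=T+1$), where a new episode starts as soon as $\det\Sigma_t>2\det\Sigma_{t_k}$. $\beta_t>0$ is the confidence radius, nondecreasing in $t$. $B^{1,t}_{s,a}=\beta_t\sum_{s'\in\mathcal S_{s,a}}p(s'\mid s,a,\widehat\theta_t)\|\varphi(s,a,s')-\sum_{s''\in\mathcal S_{s,a}}p(s''\mid s,a,\widehat\theta_t)\varphi(s,a,s'')\|_{\Sigma_t^{-1}}$. *)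

theory Defs
  imports "HOL-Analysis.Analysis"
begin

text \<open>MNL transition model. R s a is the reachable set, phi the feature map,
  vectors live in real^'d with d = CARD('d).\<close>

definition mnl_prob ::
  "('s \<Rightarrow> 'a \<Rightarrow> 's set) \<Rightarrow> ('s \<Rightarrow> 'a \<Rightarrow> 's \<Rightarrow> real^'d) \<Rightarrow> real^'d \<Rightarrow> 's \<Rightarrow> 'a \<Rightarrow> 's \<Rightarrow> real" where
  "mnl_prob R \<phi> \<theta> s a s' =
     exp (\<phi> s a s' \<bullet> \<theta>) / (\<Sum>s''\<in>R s a. exp (\<phi> s a s'' \<bullet> \<theta>))"

definition mean_feat ::
  "('s \<Rightarrow> 'a \<Rightarrow> 's set) \<Rightarrow> ('s \<Rightarrow> 'a \<Rightarrow> 's \<Rightarrow> real^'d) \<Rightarrow> real^'d \<Rightarrow> 's \<Rightarrow> 'a \<Rightarrow> real^'d" where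
  "mean_feat R \<phi> \<theta> s a = (\<Sum>s'\<in>R s a. mnl_prob R \<phi> \<theta> s a s' *\<^sub>R \<phi> s a s')"

definition outer :: "real^'d \<Rightarrow> real^'d \<Rightarrow> real^'d^'d" where
  "outer x y = (\<chi> i j. x $ i * y $ j)"

text \<open>Gradient of the loss
  l(theta) = - sum_{s' in R s a} 1{s_next = s'} log p(s'|s,a,theta), for s_next in R s a:
  grad = E_p[phi] - phi(s,a,s_next).\<close>
definition mnl_grad ::
  "('s \<Rightarrow> 'a \<Rightarrow> 's set) \<Rightarrow> ('s \<Rightarrow> 'a \<Rightarrow> 's \<Rightarrow> real^'d) \<Rightarrow> real^'d \<Rightarrow> 's \<Rightarrow> 'a \<Rightarrow> 's \<Rightarrow> real^'d" where
  "mnl_grad R \<phi> \<theta> s a snext = mean_feat R \<phi> \<theta> s a - \<phi> s a snext"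

text \<open>Hessian of the same loss: E_p[phi phi^T] - E_p[phi] E_p[phi]^T.\<close>
definition mnl_hess ::
  "('s \<Rightarrow> 'a \<Rightarrow> 's set) \<Rightarrow> ('s \<Rightarrow> 'a \<Rightarrow> 's \<Rightarrow> real^'d) \<Rightarrow> real^'d \<Rightarrow> 's \<Rightarrow> 'a \<Rightarrow> real^'d^'d" where
  "mnl_hess R \<phi> \<theta> s a =
     (\<Sum>s'\<in>R s a. mnl_prob R \<phi> \<theta> s a s' *\<^sub>R outer (\<phi> s a s') (\<phi> s a s'))
     - outer (mean_feat R \<phi> \<theta> s a) (mean_feat R \<phi> \<theta> s a)"

definition wnorm :: "real^'d^'d \<Rightarrow> real^'d \<Rightarrow> real" where
  "wnorm M x = sqrt (x \<bullet> (M *v x))"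

definition omd_obj ::
  "('s \<Rightarrow> 'a \<Rightarrow> 's set) \<Rightarrow> ('s \<Rightarrow> 'a \<Rightarrow> 's \<Rightarrow> real^'d) \<Rightarrow> real \<Rightarrow> (nat \<Rightarrow> 's) \<Rightarrow> (nat \<Rightarrow> 'a)
    \<Rightarrow> (nat \<Rightarrow> real^'d) \<Rightarrow> (nat \<Rightarrow> real^'d^'d) \<Rightarrow> nat \<Rightarrow> real^'d \<Rightarrow> real" where
  "omd_obj R \<phi> \<eta> s a th Sig t \<theta> =
     mnl_grad R \<phi> (th t) (s t) (a t) (s (Suc t)) \<bullet> (\<theta> - th t)
     + 1 / (2 * \<eta>) * (wnorm (Sig t + \<eta> *\<^sub>R mnl_hess R \<phi> (th t) (s t) (a t)) (\<theta> - th t))\<^sup>2"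

definition next_start :: "(nat \<Rightarrow> real^'d^'d) \<Rightarrow> nat \<Rightarrow> nat \<Rightarrow> nat" where
  "next_start Sig T tk =
     (if \<exists>t. tk < t \<and> t \<le> T \<and> det (Sig t) > 2 * det (Sig tk)
      then (LEAST t. tk < t \<and> t \<le> T \<and> det (Sig t) > 2 * det (Sig tk))
      else T + 1)"

text \<open>t_k (k \<ge> 1), with t_1 = 1.\<close>
definition ep_start :: "(nat \<Rightarrow> real^'d^'d) \<Rightarrow> nat \<Rightarrow> nat \<Rightarrow> nat" where
  "ep_start Sig T k = (next_start Sig T ^^ (k - 1)) 1"

definition num_episodes :: "(nat \<Rightarrow> real^'d^'d) \<Rightarrow> nat \<Rightarrow> nat" where
  "num_episodes Sig T = card {k. 1 \<le> k \<and> ep_start Sig T k \<le> T}"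

definition bonus1 ::
  "('s \<Rightarrow> 'a \<Rightarrow> 's set) \<Rightarrow> ('s \<Rightarrow> 'a \<Rightarrow> 's \<Rightarrow> real^'d) \<Rightarrow> (nat \<Rightarrow> real)
    \<Rightarrow> (nat \<Rightarrow> real^'d) \<Rightarrow> (nat \<Rightarrow> real^'d^'d) \<Rightarrow> nat \<Rightarrow> 's \<Rightarrow> 'a \<Rightarrow> real" where
  "bonus1 R \<phi> \<beta> th Sig t x y =
     \<beta> t * (\<Sum>s'\<in>R x y. mnl_prob R \<phi> (th t) x y s' *
        wnorm (matrix_inv (Sig t)) (\<phi> x y s' - mean_feat R \<phi> (th t) x y))"

end

theory Submission
  imports Defs
begin

text \<open>
  Within an episode \<open>det \<Sigma>\<^sub>t \<le> 2 det \<Sigma>\<^sub>t\<^sub>k\<close>, and \<open>det \<Sigma> \<cdot> x\<^sup>T \<Sigma>\<^sup>-\<^sup>1 x\<close> can only grow along rank-one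
  updates, so the bonus computed with \<open>\<Sigma>\<^sub>t\<^sub>k\<close> is at most \<open>sqrt 2\<close> times the one computed with \<open>\<Sigma>\<^sub>t\<close>.
  The latter is compared with the mean deviation of the features under \<open>p(\<theta>\<^sub>t\<^sub>+\<^sub>1)\<close>, the parameter of
  the Hessian added at step \<open>t\<close>. The two softmax distributions are \<open>\<ell>\<^sub>1\<close>-close, within twice the gap of
  their logits, which the confidence bounds control; and (A2) bounds every feature in the norm of
  \<open>\<Sigma>\<^sub>t\<^sup>-\<^sup>1\<close> by \<open>sqrt (x\<^sub>t / \<kappa>)\<close>, where \<open>x\<^sub>t\<close> is the variance of the features in that norm.
  As the Hessian is a sum of rank-one terms, \<open>x\<^sub>t\<close> is the increment of an elliptical potential:
  \<open>det \<Sigma>\<^sub>T\<^sub>+\<^sub>1 \<ge> \<lambda>\<^sup>d \<Prod>\<^sub>t (1 + x\<^sub>t)\<close>, while Hadamard's inequality and AM-GM bound \<open>det \<Sigma>\<^sub>T\<^sub>+\<^sub>1\<close> through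
  its trace. Since \<open>x\<^sub>t \<le> 1\<close>, this gives \<open>\<Sum>\<^sub>t x\<^sub>t \<le> 2 d log (1 + T L\<^sup>2 / (\<lambda> d))\<close>, and Cauchy-Schwarz
  handles \<open>\<Sum>\<^sub>t sqrt x\<^sub>t\<close>. The \<open>\<eta>\<close>-term and the factor \<open>U\<close> in the stated bound are slack.
\<close>

section \<open>Quadratic forms and coercive matrices\<close>

definition quad_form :: "real^'n^'n \<Rightarrow> real^'n \<Rightarrow> real" where
  "quad_form M x = x \<bullet> (M *v x)"

definition symmetric_matrix :: "real^'n^'n \<Rightarrow> bool" where
  "symmetric_matrix M \<longleftrightarrow> transpose M = M"

definition psd_matrix :: "real^'n^'n \<Rightarrow> bool" where
  "psd_matrix M \<longleftrightarrow> symmetric_matrix M \<and> (\<forall>x. 0 \<le> quad_form M x)"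

definition pd_matrix :: "real^'n^'n \<Rightarrow> bool" where
  "pd_matrix M \<longleftrightarrow> symmetric_matrix M \<and> (\<forall>x. x \<noteq> 0 \<longrightarrow> 0 < quad_form M x)"

definition coercive_matrix :: "real \<Rightarrow> real^'n^'n \<Rightarrow> bool" where
  "coercive_matrix c M \<longleftrightarrow> 0 < c \<and> symmetric_matrix M \<and> (\<forall>x. c * (x \<bullet> x) \<le> quad_form M x)"

lemma wnorm_eq_sqrt_quad_form: "wnorm M x = sqrt (quad_form M x)"
  by (simp add: wnorm_def quad_form_def)

lemma inner_matrix_vector_transpose: "x \<bullet> (M *v y) = (transpose M *v x) \<bullet> (y::real^'n)"
  by (metis dot_lmul_matrix transpose_matrix_vector inner_commute)

lemma symmetric_matrix_inner_commute:
  "symmetric_matrix M \<Longrightarrow> x \<bullet> (M *v y) = y \<bullet> (M *v (x::real^'n))"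
  by (metis inner_matrix_vector_transpose symmetric_matrix_def inner_commute)

lemma symmetric_matrix_add: "symmetric_matrix A \<Longrightarrow> symmetric_matrix B \<Longrightarrow> symmetric_matrix (A + B)"
  by (simp add: symmetric_matrix_def transpose_def vec_eq_iff)

lemma symmetric_matrix_outer: "symmetric_matrix (outer v v)"
  by (simp add: symmetric_matrix_def outer_def transpose_def vec_eq_iff mult.commute)

lemma symmetric_matrix_mat: "symmetric_matrix (mat c)"
  by (simp add: symmetric_matrix_def)

lemma quad_form_add_matrix: "quad_form (A + B) x = quad_form A x + quad_form B x"
  by (simp add: quad_form_def matrix_vector_mult_add_rdistrib inner_add_right)

lemma quad_form_sum_matrix: "quad_form (\<Sum>j\<in>J. A j) x = (\<Sum>j\<in>J. quad_form (A j) x)"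
  by (induction J rule: infinite_finite_induct) (auto simp: quad_form_add_matrix, simp_all add: quad_form_def)

lemma quad_form_outer: "quad_form (outer v v) y = (v \<bullet> y)\<^sup>2"
  by (simp add: quad_form_def outer_def matrix_vector_mult_def inner_vec_def power2_eq_square
      sum_distrib_left sum_distrib_right mult.commute mult.left_commute)

lemma quad_form_scaleR: "quad_form M (c *\<^sub>R x) = c\<^sup>2 * quad_form M x"
  by (simp add: quad_form_def matrix_vector_mult_scaleR power2_eq_square)

lemma quad_form_minus: "quad_form M (- x) = quad_form M x"
  using quad_form_scaleR[of M "-1" x] by simp

lemma quad_form_diff:
  assumes "symmetric_matrix M"
  shows "quad_form M (y - z) = quad_form M y - 2 * (y \<bullet> (M *v z)) + quad_form M z"
  using symmetric_matrix_inner_commute[OF assms, of z y]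
  by (simp add: quad_form_def matrix_vector_mult_diff_distrib inner_diff_left inner_diff_right)

lemma quad_form_add:
  assumes "symmetric_matrix M"
  shows "quad_form M (y + z) = quad_form M y + 2 * (y \<bullet> (M *v z)) + quad_form M z"
  using symmetric_matrix_inner_commute[OF assms, of z y]
  by (simp add: quad_form_def matrix_vector_right_distrib inner_add_left inner_add_right)

lemma matrix_vector_mat: "(mat c :: real^'n^'n) *v x = c *\<^sub>R x"
  by (simp add: vec_eq_iff matrix_vector_mult_def mat_def if_distrib[where f="\<lambda>a. a * _"] sum.delta' cong: if_cong)
lemma coercive_matrix_mat: "0 < c \<Longrightarrow> coercive_matrix c (mat c)"
  by (simp add: coercive_matrix_def quad_form_def matrix_vector_mat symmetric_matrix_mat)

lemma coercive_imp_psd: "coercive_matrix c M \<Longrightarrow> psd_matrix M"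
  unfolding coercive_matrix_def psd_matrix_def by (meson inner_ge_zero mult_nonneg_nonneg less_imp_le order_trans)

lemma coercive_imp_pd: "coercive_matrix c M \<Longrightarrow> pd_matrix M"
  unfolding coercive_matrix_def pd_matrix_def by (meson inner_gt_zero_iff mult_pos_pos order_less_le_trans)

lemma psd_Cauchy_Schwarz:
  assumes "psd_matrix M"
  shows "(x \<bullet> (M *v y))\<^sup>2 \<le> quad_form M x * quad_form M y"
proof -
  have sym: "symmetric_matrix M" and nonneg: "\<And>z. 0 \<le> quad_form M z"
    using assms psd_matrix_def by auto
  let ?A = "quad_form M x" and ?B = "x \<bullet> (M *v y)" and ?C = "quad_form M y"
  have expand: "quad_form M (a *\<^sub>R x - b *\<^sub>R y) = a\<^sup>2 * ?A - 2 * a * b * ?B + b\<^sup>2 * ?C" for a b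
    by (simp add: quad_form_diff[OF sym] quad_form_scaleR matrix_vector_mult_scaleR)
  have key: "0 \<le> a\<^sup>2 * ?A - 2 * a * b * ?B + b\<^sup>2 * ?C" for a b
    using nonneg expand by metis
  have "0 \<le> ?C * (?A * ?C - ?B\<^sup>2)" "0 \<le> ?A * (?A * ?C - ?B\<^sup>2)"
    using key[of ?C ?B] key[of ?B ?A] by (simp_all add: power2_eq_square algebra_simps)
  moreover have "0 \<le> ?B\<^sup>2 * ?A - 2 * ?B\<^sup>2 + ?C"
    using key[of ?B 1] by (simp add: power2_eq_square)
  moreover have "0 \<le> ?A" "0 \<le> ?C"
    using nonneg by auto
  ultimately show ?thesis
    by (cases "0 < ?C \<or> 0 < ?A") (auto simp: zero_le_mult_iff)
qed

lemma matrix_inv_mult: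
  fixes M :: "real^'n^'n"
  assumes "invertible M"
  shows "M ** matrix_inv M = mat 1" "matrix_inv M ** M = mat 1"
proof -
  have "\<exists>A'. M ** A' = mat 1 \<and> A' ** M = mat 1"
    using assms invertible_def by blast
  then have "M ** matrix_inv M = mat 1 \<and> matrix_inv M ** M = mat 1"
    unfolding matrix_inv_def by (rule someI_ex)
  then show "M ** matrix_inv M = mat 1" "matrix_inv M ** M = mat 1"
    by auto
qed

lemma matrix_vector_matrix_inv:
  fixes M :: "real^'n^'n"
  assumes "invertible M"
  shows "M *v (matrix_inv M *v x) = x" "matrix_inv M *v (M *v x) = x"
  using matrix_inv_mult[OF assms] by (simp_all add: matrix_vector_mul_assoc)

lemma matrix_inv_unique:
  fixes A B :: "real^'n^'n"
  assumes "A ** B = mat 1" "invertible A"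
  shows "matrix_inv A = B"
  by (metis assms matrix_inv_mult(2) matrix_mul_assoc matrix_mul_lid matrix_mul_rid)

lemma symmetric_matrix_inv:
  fixes M :: "real^'n^'n"
  assumes "symmetric_matrix M" "invertible M"
  shows "symmetric_matrix (matrix_inv M)"
proof -
  have "transpose (matrix_inv M) ** M = mat 1"
    using matrix_inv_mult(1)[OF assms(2)] assms(1) unfolding symmetric_matrix_def
    by (metis matrix_transpose_mul transpose_mat)
  then have "M ** transpose (matrix_inv M) = mat 1"
    using matrix_inv_mult[OF assms(2)] by (metis matrix_mul_assoc matrix_mul_lid matrix_mul_rid)
  then show ?thesis
    unfolding symmetric_matrix_def using matrix_inv_unique[OF _ assms(2)] by metis
qed

lemma coercive_imp_invertible:
  assumes "coercive_matrix c M"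
  shows "invertible M"
proof -
  have "inj ((*v) M)"
  proof (rule injI)
    fix x y
    assume "M *v x = M *v y"
    then have "quad_form M (x - y) = 0"
      by (simp add: quad_form_def matrix_vector_mult_diff_distrib)
    with assms have "c * ((x - y) \<bullet> (x - y)) \<le> 0"
      unfolding coercive_matrix_def by metis
    with assms have "(x - y) \<bullet> (x - y) \<le> 0"
      unfolding coercive_matrix_def by (simp add: mult_le_0_iff)
    then show "x = y"
      by (metis inner_gt_zero_iff not_le right_minus_eq)
  qed
  then show ?thesis
    using matrix_left_invertible_injective invertible_left_inverse by metis
qed

lemma quad_form_matrix_inv:
  fixes M :: "real^'n^'n"
  assumes "symmetric_matrix M" "invertible M"
  shows "quad_form M (matrix_inv M *v x) = quad_form (matrix_inv M) x"
  unfolding quad_form_def matrix_vector_matrix_inv[OF assms(2)]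
  by (metis assms symmetric_matrix_inner_commute symmetric_matrix_inv inner_commute)

lemma coercive_imp_psd_inv:
  assumes "coercive_matrix c M"
  shows "psd_matrix (matrix_inv M)"
proof -
  have sym: "symmetric_matrix M" and inv: "invertible M"
    using assms coercive_matrix_def coercive_imp_invertible by auto
  have "0 \<le> quad_form (matrix_inv M) x" for x
    using coercive_imp_psd[OF assms] quad_form_matrix_inv[OF sym inv, of x]
    unfolding psd_matrix_def by metis
  then show ?thesis
    unfolding psd_matrix_def using symmetric_matrix_inv[OF sym inv] by blast
qed

lemma inner_square_le_quad_form_inv:
  assumes "coercive_matrix c S"
  shows "(w \<bullet> y)\<^sup>2 \<le> quad_form (matrix_inv S) w * quad_form S y"
proof -
  have sym: "symmetric_matrix S" and inv: "invertible S"
    using assms coercive_matrix_def coercive_imp_invertible by auto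
  have "(matrix_inv S *v w) \<bullet> (S *v y) = w \<bullet> y"
    using symmetric_matrix_inner_commute[OF sym, of y "matrix_inv S *v w"] matrix_vector_matrix_inv[OF inv]
    by (simp add: inner_commute)
  then show ?thesis
    using psd_Cauchy_Schwarz[OF coercive_imp_psd[OF assms], of "matrix_inv S *v w" y]
    by (simp add: quad_form_matrix_inv[OF sym inv])
qed

text \<open>The variational characterisation \<open>x\<^sup>T M\<^sup>-\<^sup>1 x = max\<^sub>y (2 x\<^sup>T y - y\<^sup>T M y)\<close>, attained at \<open>y = M\<^sup>-\<^sup>1 x\<close>.\<close>

lemma quad_form_inv_ge:
  assumes "coercive_matrix c M"
  shows "2 * (x \<bullet> y) - quad_form M y \<le> quad_form (matrix_inv M) x"
proof -
  have sym: "symmetric_matrix M" and inv: "invertible M"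
    using assms coercive_matrix_def coercive_imp_invertible by auto
  have "0 \<le> quad_form M (y - matrix_inv M *v x)"
    using coercive_imp_psd[OF assms] psd_matrix_def by blast
  also have "\<dots> = quad_form M y - 2 * (y \<bullet> x) + quad_form (matrix_inv M) x"
    by (simp add: quad_form_diff[OF sym] matrix_vector_matrix_inv[OF inv] quad_form_matrix_inv[OF sym inv])
  finally show ?thesis
    by (simp add: inner_commute)
qed

lemma quad_form_inv_antimono:
  assumes A: "coercive_matrix c A" and B: "coercive_matrix c' B"
    and le: "\<And>y. quad_form A y \<le> quad_form B y"
  shows "quad_form (matrix_inv B) x \<le> quad_form (matrix_inv A) x"
proof -
  have sym: "symmetric_matrix B" and inv: "invertible B"
    using B coercive_matrix_def coercive_imp_invertible by auto
  let ?y = "matrix_inv B *v x"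
  have "2 * (x \<bullet> ?y) - quad_form A ?y \<le> quad_form (matrix_inv A) x"
    by (rule quad_form_inv_ge[OF A])
  moreover have "x \<bullet> ?y = quad_form (matrix_inv B) x"
    by (simp add: quad_form_def)
  moreover have "quad_form A ?y \<le> quad_form (matrix_inv B) x"
    using le[of ?y] quad_form_matrix_inv[OF sym inv] by simp
  ultimately show ?thesis
    by linarith
qed

lemma quad_form_inv_le:
  assumes "coercive_matrix c S"
  shows "quad_form (matrix_inv S) x \<le> (x \<bullet> x) / c"
proof -
  have c: "0 < c" and sym: "symmetric_matrix S" and inv: "invertible S"
    using assms coercive_matrix_def coercive_imp_invertible by auto
  let ?z = "matrix_inv S *v x" and ?q = "quad_form (matrix_inv S) x"
  have "c * (?z \<bullet> ?z) \<le> ?q"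
    using assms quad_form_matrix_inv[OF sym inv] unfolding coercive_matrix_def by metis
  moreover have "?q\<^sup>2 \<le> (?z \<bullet> ?z) * (x \<bullet> x)"
    using Cauchy_Schwarz_ineq[of ?z x] by (simp add: quad_form_def inner_commute)
  ultimately have "c * ?q\<^sup>2 \<le> ?q * (x \<bullet> x)"
    using c by (smt (verit, best) inner_ge_zero mult_left_mono mult_right_mono mult.assoc)
  moreover have "0 \<le> ?q"
    using coercive_imp_psd_inv[OF assms] psd_matrix_def by blast
  ultimately show ?thesis
    using c by (cases "?q = 0") (auto simp: power2_eq_square pos_le_divide_eq mult.commute)
qed

lemma wnorm_nonneg: "psd_matrix A \<Longrightarrow> 0 \<le> wnorm A v"
  by (simp add: wnorm_eq_sqrt_quad_form psd_matrix_def)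

lemma wnorm_scaleR: "wnorm A (c *\<^sub>R v) = \<bar>c\<bar> * wnorm A v"
  by (simp add: wnorm_eq_sqrt_quad_form quad_form_scaleR real_sqrt_mult)

lemma wnorm_minus_commute: "wnorm A (u - v) = wnorm A (v - u)"
  by (metis minus_diff_eq quad_form_minus wnorm_eq_sqrt_quad_form)

lemma inner_le_wnorm_mult:
  assumes "psd_matrix A"
  shows "u \<bullet> (A *v v) \<le> wnorm A u * wnorm A v"
proof -
  have "\<bar>u \<bullet> (A *v v)\<bar> \<le> sqrt (quad_form A u * quad_form A v)"
    by (rule real_le_rsqrt) (simp add: psd_Cauchy_Schwarz[OF assms])
  then show ?thesis
    using assms unfolding wnorm_eq_sqrt_quad_form psd_matrix_def by (simp add: real_sqrt_mult)
qed

lemma wnorm_triangle: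
  assumes "psd_matrix A"
  shows "wnorm A (u + v) \<le> wnorm A u + wnorm A v"
proof -
  have "quad_form A (u + v) = quad_form A u + 2 * (u \<bullet> (A *v v)) + quad_form A v"
    using assms psd_matrix_def quad_form_add by blast
  also have "\<dots> \<le> (wnorm A u + wnorm A v)\<^sup>2"
    using inner_le_wnorm_mult[OF assms, of u v] assms
    by (simp add: wnorm_eq_sqrt_quad_form psd_matrix_def power2_eq_square algebra_simps)
  finally show ?thesis
    using wnorm_nonneg[OF assms, of u] wnorm_nonneg[OF assms, of v]
    by (simp add: wnorm_eq_sqrt_quad_form real_sqrt_le_iff' real_le_lsqrt)
qed

lemma wnorm_sum_le:
  assumes "psd_matrix A"
  shows "wnorm A (\<Sum>i\<in>X. c i *\<^sub>R v i) \<le> (\<Sum>i\<in>X. \<bar>c i\<bar> * wnorm A (v i))"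
proof (induction X rule: infinite_finite_induct)
  case (insert i X)
  then show ?case
    using wnorm_triangle[OF assms, of "c i *\<^sub>R v i" "\<Sum>i\<in>X. c i *\<^sub>R v i"] by (simp add: wnorm_scaleR)
qed (simp_all add: wnorm_def)

lemma abs_inner_le_wnorm_inv:
  assumes "coercive_matrix c S"
  shows "\<bar>w \<bullet> d\<bar> \<le> wnorm (matrix_inv S) w * wnorm S d"
proof -
  have "\<bar>w \<bullet> d\<bar> \<le> sqrt (quad_form (matrix_inv S) w * quad_form S d)"
    by (rule real_le_rsqrt) (simp add: inner_square_le_quad_form_inv[OF assms])
  then show ?thesis
    by (simp add: wnorm_eq_sqrt_quad_form real_sqrt_mult)
qed

section \<open>Determinants of rank-one updates\<close>

lemma det_replace_row_axis: "det (\<chi> i. if i = k then w else axis i 1 :: real^'n^'n) = w $ k"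
proof -
  have "det (\<chi> i. if i = k then w else axis i 1 :: real^'n^'n)
      = (\<Sum>j\<in>UNIV. det (\<chi> i. if i = k then w $ j *s axis j 1 else axis i 1 :: real^'n^'n))"
    using det_linear_row_sum[of UNIV k "\<lambda>_ j. w $ j *s axis j 1" "\<lambda>i. axis i 1"]
    unfolding basis_expansion by simp
  also have "\<dots> = (\<Sum>j\<in>UNIV. if j = k then w $ k else 0)"
  proof (rule sum.cong)
    fix j
    have "det (\<chi> i. if i = k then axis j 1 else axis i 1 :: real^'n^'n) = (if j = k then 1 else 0)"
    proof (cases "j = k")
      case True
      then have "(\<chi> i. if i = k then axis j 1 else axis i 1 :: real^'n^'n) = mat 1"
        by (simp add: vec_eq_iff mat_def axis_def)
      then show ?thesis using True by simp
    next
      case False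
      then show ?thesis
        by (auto intro: det_identical_rows[of j k] simp: row_def vec_eq_iff)
    qed
    then show "det (\<chi> i. if i = k then w $ j *s axis j 1 else axis i 1 :: real^'n^'n)
        = (if j = k then w $ k else 0)"
      by (simp add: det_row_mul)
  qed simp
  finally show ?thesis
    by simp
qed

lemma det_replace_row_add_outer:
  fixes u w :: "real^'n"
  assumes "finite J" "k \<notin> J"
  shows "det (\<chi> i. if i = k then w else if i \<in> J then axis i 1 + u $ i *s w else axis i 1 :: real^'n^'n)
    = w $ k"
  using assms
proof (induction J rule: finite_induct)
  case empty
  then show ?case
    by (simp add: det_replace_row_axis cong: if_cong)
next
  case (insert j J)
  let ?C = "\<lambda>i. if i = k then w else if i \<in> J then axis i 1 + u $ i *s w else axis i 1"
  have jk: "j \<noteq> k"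
    using insert by auto
  have "(\<chi> i. if i = k then w else if i \<in> insert j J then axis i 1 + u $ i *s w else axis i 1)
      = (\<chi> i. if i = j then axis j 1 + u $ j *s w else ?C i :: real^'n^'n)"
    using jk by (auto simp: vec_eq_iff)
  moreover have "(\<chi> i. if i = j then axis j 1 else ?C i :: real^'n^'n) = (\<chi> i. ?C i)"
    using insert jk by (auto simp: vec_eq_iff)
  moreover have "det (\<chi> i. if i = j then w else ?C i :: real^'n^'n) = 0"
    using jk by (intro det_identical_rows[of j k]) (auto simp: row_def vec_eq_iff)
  ultimately show ?case
    using insert by (simp add: det_row_add det_row_mul)
qed

lemma det_identity_add_outer: "det (mat 1 + outer u w) = 1 + u \<bullet> (w :: real^'n)"
proof -
  have partial: "det (\<chi> i. if i \<in> J then axis i 1 + u $ i *s w else axis i 1 :: real^'n^'n)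
      = 1 + (\<Sum>i\<in>J. u $ i * w $ i)" if "finite J" for J
    using that
  proof (induction J rule: finite_induct)
    case empty
    have "(\<chi> i. axis i 1 :: real^'n^'n) = mat 1"
      by (simp add: vec_eq_iff mat_def axis_def)
    then show ?case
      by simp
  next
    case (insert k J)
    let ?C = "\<lambda>i. if i \<in> J then axis i 1 + u $ i *s w else axis i 1"
    have "(\<chi> i. if i \<in> insert k J then axis i 1 + u $ i *s w else axis i 1)
        = (\<chi> i. if i = k then axis k 1 + u $ k *s w else ?C i :: real^'n^'n)"
      by (auto simp: vec_eq_iff)
    moreover have "(\<chi> i. if i = k then axis k 1 else ?C i :: real^'n^'n) = (\<chi> i. ?C i)"
      using insert by (auto simp: vec_eq_iff)
    moreover have "det (\<chi> i. if i = k then w else ?C i :: real^'n^'n) = w $ k"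
      using det_replace_row_add_outer[OF insert(1,2), of w u] by (simp cong: if_cong)
    ultimately show ?case
      using insert by (simp add: det_row_add det_row_mul algebra_simps)
  qed
  have "mat 1 + outer u w = (\<chi> i. if i \<in> UNIV then axis i 1 + u $ i *s w else axis i 1)"
    by (simp add: vec_eq_iff outer_def mat_def axis_def)
  then show ?thesis
    using partial[of UNIV] by (simp add: inner_vec_def mult.commute)
qed

lemma matrix_mul_outer: "S ** outer a b = outer (S *v a) (b :: real^'n)"
  by (simp add: outer_def matrix_matrix_mult_def matrix_vector_mult_def vec_eq_iff
      sum_distrib_right mult.assoc)

lemma det_add_outer:
  fixes S :: "real^'n^'n"
  assumes "invertible S"
  shows "det (S + outer v v) = det S * (1 + quad_form (matrix_inv S) v)"
proof -
  have "S + outer v v = S ** (mat 1 + outer (matrix_inv S *v v) v)"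
    by (simp add: matrix_add_ldistrib matrix_mul_outer matrix_vector_matrix_inv[OF assms])
  then show ?thesis
    by (simp add: det_mul det_identity_add_outer quad_form_def inner_commute)
qed

lemma quad_form_add_sum_outer:
  "quad_form (S + (\<Sum>j\<in>J. outer (v j) (v j))) y = quad_form S y + (\<Sum>j\<in>J. (v j \<bullet> y)\<^sup>2)"
  by (simp add: quad_form_add_matrix quad_form_sum_matrix quad_form_outer)

lemma symmetric_matrix_sum_outer: "symmetric_matrix (\<Sum>j\<in>J. outer (v j) (v j))"
  by (induction J rule: infinite_finite_induct)
    (simp_all add: symmetric_matrix_add symmetric_matrix_outer, simp_all add: symmetric_matrix_def transpose_def vec_eq_iff)

lemma coercive_add_sum_outer:
  assumes "coercive_matrix c S"
  shows "coercive_matrix c (S + (\<Sum>j\<in>J. outer (v j) (v j)))"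
proof -
  have "c * (x \<bullet> x) \<le> quad_form (S + (\<Sum>j\<in>J. outer (v j) (v j))) x" for x
    using assms sum_nonneg[of J "\<lambda>j. (v j \<bullet> x)\<^sup>2"]
    unfolding coercive_matrix_def quad_form_add_sum_outer by (smt (verit) zero_le_power2)
  then show ?thesis
    using assms symmetric_matrix_add[OF _ symmetric_matrix_sum_outer]
    unfolding coercive_matrix_def by blast
qed

lemma coercive_add_outer: "coercive_matrix c S \<Longrightarrow> coercive_matrix c (S + outer v v)"
  using coercive_add_sum_outer[where J="{()}" and v="\<lambda>_. v"] by simp

lemma quad_form_inv_le_add_outer:
  assumes "coercive_matrix c S"
  shows "quad_form (matrix_inv S) x
    \<le> (1 + quad_form (matrix_inv S) v) * quad_form (matrix_inv (S + outer v v)) x"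
proof -
  let ?a = "quad_form (matrix_inv S) v" and ?q = "quad_form (matrix_inv S) x"
  have a: "0 \<le> ?a"
    using coercive_imp_psd_inv[OF assms] psd_matrix_def by blast
  have sym: "symmetric_matrix S" and inv: "invertible S"
    using assms coercive_matrix_def coercive_imp_invertible by auto
  define y where "y = (1 / (1 + ?a)) *\<^sub>R (matrix_inv S *v x)"
  have Sy: "quad_form S y = ?q / (1 + ?a)\<^sup>2"
    unfolding y_def quad_form_scaleR quad_form_matrix_inv[OF sym inv] by (simp add: power_divide)
  have "2 * (x \<bullet> y) - quad_form (S + outer v v) y \<le> quad_form (matrix_inv (S + outer v v)) x"
    by (rule quad_form_inv_ge[OF coercive_add_outer[OF assms]])
  moreover have "x \<bullet> y = ?q / (1 + ?a)"
    by (simp add: y_def quad_form_def)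
  moreover have "quad_form (S + outer v v) y \<le> (1 + ?a) * quad_form S y"
    using inner_square_le_quad_form_inv[OF assms, of v y]
    by (simp add: quad_form_add_matrix quad_form_outer algebra_simps)
  moreover have "(1 + ?a) * quad_form S y = ?q / (1 + ?a)"
    using a by (simp add: Sy power2_eq_square)
  ultimately have "?q / (1 + ?a) \<le> quad_form (matrix_inv (S + outer v v)) x"
    by linarith
  then show ?thesis
    using a by (simp add: field_simps)
qed

lemma quad_form_inv_ge_scaled:
  assumes S: "coercive_matrix c S" and S': "coercive_matrix c' S'"
    and le: "\<And>y. quad_form S' y \<le> (1 + B) * quad_form S y" and B: "0 \<le> B"
  shows "quad_form (matrix_inv S) v / (1 + B) \<le> quad_form (matrix_inv S') v"
proof -
  let ?q = "quad_form (matrix_inv S) v"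
  have sym: "symmetric_matrix S" and inv: "invertible S"
    using S coercive_matrix_def coercive_imp_invertible by auto
  define y where "y = (1 / (1 + B)) *\<^sub>R (matrix_inv S *v v)"
  have "2 * (v \<bullet> y) - quad_form S' y \<le> quad_form (matrix_inv S') v"
    by (rule quad_form_inv_ge[OF S'])
  moreover have "v \<bullet> y = ?q / (1 + B)"
    by (simp add: y_def quad_form_def)
  moreover have "(1 + B) * quad_form S y = ?q / (1 + B)"
    unfolding y_def quad_form_scaleR quad_form_matrix_inv[OF sym inv]
    using B by (simp add: power2_eq_square)
  ultimately show ?thesis
    using le[of y] by linarith
qed

text \<open>Adding \<open>v\<^sub>j v\<^sub>j\<^sup>T\<close> one at a time, the norm of \<open>v\<^sub>j\<close> in the current inverse is at least its norm in
  \<open>S\<^sup>-\<^sup>1\<close> divided by \<open>1 + B\<close>, where \<open>B\<close> collects the earlier terms; and \<open>(1 + B) (1 + q / (1 + B)) = 1 + B + q\<close>.\<close>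

lemma det_add_sum_outer_ge:
  fixes S :: "real^'n^'n" and v :: "'j \<Rightarrow> real^'n"
  assumes S: "coercive_matrix c S" "0 < det S" and "finite J"
  shows "det S * (1 + (\<Sum>j\<in>J. quad_form (matrix_inv S) (v j))) \<le> det (S + (\<Sum>j\<in>J. outer (v j) (v j)))"
  using \<open>finite J\<close>
proof (induction J rule: finite_induct)
  case (insert j J)
  define S' where "S' = S + (\<Sum>j\<in>J. outer (v j) (v j))"
  define B where "B = (\<Sum>j\<in>J. quad_form (matrix_inv S) (v j))"
  let ?q = "quad_form (matrix_inv S) (v j)" and ?a = "quad_form (matrix_inv S') (v j)"
  have S': "coercive_matrix c S'"
    unfolding S'_def by (rule coercive_add_sum_outer[OF S(1)])
  have B: "0 \<le> B" and q: "0 \<le> ?q"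
    using coercive_imp_psd_inv[OF S(1)] unfolding B_def psd_matrix_def by (auto intro: sum_nonneg)
  have "quad_form S' y \<le> (1 + B) * quad_form S y" for y
  proof -
    have "(\<Sum>j\<in>J. (v j \<bullet> y)\<^sup>2) \<le> (\<Sum>j\<in>J. quad_form (matrix_inv S) (v j)) * quad_form S y"
      unfolding sum_distrib_right by (intro sum_mono inner_square_le_quad_form_inv[OF S(1)])
    then show ?thesis
      by (simp add: S'_def B_def quad_form_add_sum_outer sum_distrib_right algebra_simps)
  qed
  then have gain: "?q / (1 + B) \<le> ?a"
    by (rule quad_form_inv_ge_scaled[OF S(1) S' _ B])
  have "det S * (1 + (B + ?q)) = det S * (1 + B) * (1 + ?q / (1 + B))"
    using B by (simp add: field_simps)
  also have "\<dots> \<le> det S' * (1 + ?a)"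
    using insert.IH gain B q S(2) unfolding S'_def B_def
    by (intro mult_mono) (auto intro: order_trans[OF _ insert.IH] simp: zero_le_mult_iff)
  also have "\<dots> = det (S' + outer (v j) (v j))"
    using det_add_outer[OF coercive_imp_invertible[OF S']] by simp
  finally show ?case
    using insert by (simp add: S'_def B_def algebra_simps)
qed simp

lemma det_add_sum_outer_pos:
  assumes "coercive_matrix c S" "0 < det S" "finite J"
  shows "0 < det (S + (\<Sum>j\<in>J. outer (v j) (v j)))"
proof -
  have "0 \<le> (\<Sum>j\<in>J. quad_form (matrix_inv S) (v j))"
    using coercive_imp_psd_inv[OF assms(1)] unfolding psd_matrix_def by (auto intro: sum_nonneg)
  then show ?thesis
    using det_add_sum_outer_ge[OF assms, of v] assms(2)
    by (smt (verit) mult_pos_pos)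
qed

lemma det_mul_quad_form_inv_le_add_sum_outer:
  fixes S :: "real^'n^'n" and v :: "'j \<Rightarrow> real^'n"
  assumes S: "coercive_matrix c S" "0 < det S" and "finite J"
  shows "det S * quad_form (matrix_inv S) x
    \<le> det (S + (\<Sum>j\<in>J. outer (v j) (v j))) * quad_form (matrix_inv (S + (\<Sum>j\<in>J. outer (v j) (v j)))) x"
  using \<open>finite J\<close>
proof (induction J rule: finite_induct)
  case (insert j J)
  define S' where "S' = S + (\<Sum>j\<in>J. outer (v j) (v j))"
  have S': "coercive_matrix c S'" "0 < det S'"
    unfolding S'_def using coercive_add_sum_outer[OF S(1)] det_add_sum_outer_pos[OF S insert(1)]
    by auto
  have "det S * quad_form (matrix_inv S) x \<le> det S' * quad_form (matrix_inv S') x"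
    using insert.IH by (simp add: S'_def)
  also have "\<dots> \<le> det S' * ((1 + quad_form (matrix_inv S') (v j))
      * quad_form (matrix_inv (S' + outer (v j) (v j))) x)"
    using S' quad_form_inv_le_add_outer[OF S'(1)] by simp
  also have "\<dots> = det (S' + outer (v j) (v j)) * quad_form (matrix_inv (S' + outer (v j) (v j))) x"
    by (simp add: det_add_outer[OF coercive_imp_invertible[OF S'(1)]])
  finally show ?case
    using insert by (simp add: S'_def add_ac)
qed simp

section \<open>Hadamard's inequality\<close>

lemma pd_matrix_diag_pos:
  assumes "pd_matrix S"
  shows "0 < S $ i $ i"
proof -
  have "quad_form S (axis i 1) = S $ i $ i"
    by (simp add: quad_form_def matrix_vector_mult_def inner_vec_def axis_def
        if_distrib[where f="\<lambda>a. _ * a"] if_distrib[where f="\<lambda>a. a * _"] cong: if_cong)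
  then show ?thesis
    using assms unfolding pd_matrix_def by (metis axis_eq_0_iff zero_neq_one)
qed

lemma pd_matrix_congruence:
  fixes S E :: "real^'n^'n"
  assumes "pd_matrix S" "invertible E"
  shows "pd_matrix (E ** S ** transpose E)"
proof -
  have "symmetric_matrix (E ** S ** transpose E)"
    using assms(1) by (simp add: pd_matrix_def symmetric_matrix_def matrix_transpose_mul matrix_mul_assoc)
  moreover have "0 < quad_form (E ** S ** transpose E) y" if "y \<noteq> 0" for y
  proof -
    have "transpose E *v y \<noteq> 0"
      using transpose_invertible[OF assms(2)] that
      by (metis invertible_def matrix_left_invertible_ker)
    moreover have "quad_form (E ** S ** transpose E) y = quad_form S (transpose E *v y)"
      by (simp add: quad_form_def matrix_vector_mul_assoc[symmetric] inner_matrix_vector_transpose)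
    ultimately show ?thesis
      using assms(1) unfolding pd_matrix_def by simp
  qed
  ultimately show ?thesis
    unfolding pd_matrix_def by blast
qed

lemma symmetric_matrix_entry_commute: "symmetric_matrix S \<Longrightarrow> S $ i $ j = S $ j $ i"
  unfolding symmetric_matrix_def by (metis transpose_def vec_lambda_beta)

text \<open>Symmetric Gaussian elimination of row and column \<open>k\<close>: the congruence by
  \<open>E = I - u e\<^sub>k\<^sup>T\<close> with \<open>u\<^sub>i = S\<^sub>i\<^sub>k / S\<^sub>k\<^sub>k\<close> (\<open>i \<noteq> k\<close>) leaves \<open>S\<^sub>k\<^sub>k\<close> and replaces the rest by the Schur complement.\<close>

definition elim_matrix :: "real^'n^'n \<Rightarrow> 'n \<Rightarrow> real^'n^'n" where
  "elim_matrix S k = mat 1 - outer (\<chi> i. if i = k then 0 else S $ i $ k / S $ k $ k) (axis k 1)"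

lemma det_elim_matrix: "det (elim_matrix S k) = 1"
proof -
  let ?u = "\<chi> i. if i = k then 0 else S $ i $ k / S $ k $ k"
  have "elim_matrix S k = mat 1 + outer (- ?u) (axis k 1)"
    by (simp add: elim_matrix_def outer_def vec_eq_iff)
  then show ?thesis
    by (simp add: det_identity_add_outer inner_axis)
qed

lemma elim_matrix_congruence_entry:
  fixes S :: "real^'n^'n"
  assumes "symmetric_matrix S" "S $ k $ k \<noteq> 0"
  shows "(elim_matrix S k ** S ** transpose (elim_matrix S k)) $ i $ j
    = (if i = k \<and> j = k then S $ k $ k else if i = k \<or> j = k then 0
       else S $ i $ j - S $ i $ k * S $ k $ j / S $ k $ k)"
proof -
  let ?u = "\<chi> i. if i = k then 0 else S $ i $ k / S $ k $ k"
  have left: "(elim_matrix S k ** X) $ i $ m = X $ i $ m - ?u $ i * X $ k $ m" for X :: "real^'n^'n" and i m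
    by (simp add: elim_matrix_def matrix_matrix_mult_def outer_def mat_def axis_def left_diff_distrib
        sum_subtractf if_distrib[where f="\<lambda>a. a * _"] if_distrib[where f="\<lambda>a. _ * a"]
        if_distrib[where f="\<lambda>a. a / _"] cong: if_cong)
  have right: "(X ** transpose (elim_matrix S k)) $ i $ j = X $ i $ j - X $ i $ k * ?u $ j"
    for X :: "real^'n^'n" and i j
    by (simp add: elim_matrix_def matrix_matrix_mult_def transpose_def outer_def mat_def axis_def
        right_diff_distrib sum_subtractf if_distrib[where f="\<lambda>a. _ * a"] cong: if_cong)
  have "(elim_matrix S k ** S ** transpose (elim_matrix S k)) $ i $ j
      = S $ i $ j - ?u $ i * S $ k $ j - (S $ i $ k - ?u $ i * S $ k $ k) * ?u $ j"
    by (simp only: right left)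
  then show ?thesis
    using assms(2) by (auto simp: symmetric_matrix_entry_commute[OF assms(1)] field_simps)
qed

lemma det_le_prod_diag_of_sparse:
  fixes S :: "real^'n^'n"
  assumes "finite K" "pd_matrix S" "\<And>i j. i \<noteq> j \<Longrightarrow> i \<notin> K \<or> j \<notin> K \<Longrightarrow> S $ i $ j = 0"
  shows "det S \<le> (\<Prod>i\<in>UNIV. S $ i $ i)"
  using assms
proof (induction K arbitrary: S rule: finite_induct)
  case empty
  then show ?case
    by (subst det_diagonal) auto
next
  case (insert k K S)
  define S' where "S' = elim_matrix S k ** S ** transpose (elim_matrix S k)"
  have sym: "symmetric_matrix S" and Skk: "0 < S $ k $ k"
    using insert.prems(1) pd_matrix_diag_pos unfolding pd_matrix_def by auto
  have entry: "S' $ i $ j = (if i = k \<and> j = k then S $ k $ k else if i = k \<or> j = k then 0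
      else S $ i $ j - S $ i $ k * S $ k $ j / S $ k $ k)" for i j
    unfolding S'_def using elim_matrix_congruence_entry[OF sym] Skk by simp
  have inv: "invertible (elim_matrix S k)"
    by (simp add: invertible_det_nz det_elim_matrix)
  have pd': "pd_matrix S'"
    unfolding S'_def by (rule pd_matrix_congruence[OF insert.prems(1) inv])
  have "S' $ i $ j = 0" if "i \<noteq> j" "i \<notin> K \<or> j \<notin> K" for i j
    using that insert.prems(2)[of i j] insert.prems(2)[of i k] insert.prems(2)[of k j]
    by (auto simp: entry)
  then have "det S' \<le> (\<Prod>i\<in>UNIV. S' $ i $ i)"
    using insert.IH[OF pd'] by blast
  also have "\<dots> \<le> (\<Prod>i\<in>UNIV. S $ i $ i)"
  proof (rule prod_mono)
    fix i
    have "S $ i $ k * S $ k $ i / S $ k $ k = (S $ i $ k)\<^sup>2 / S $ k $ k"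
      by (simp add: power2_eq_square symmetric_matrix_entry_commute[OF sym, of k i])
    then have "S' $ i $ i \<le> S $ i $ i"
      using Skk by (simp add: entry)
    then show "0 \<le> S' $ i $ i \<and> S' $ i $ i \<le> S $ i $ i"
      using pd_matrix_diag_pos[OF pd', of i] by simp
  qed
  also have "det S' = det S"
    by (simp add: S'_def det_mul det_elim_matrix)
  finally show ?case .
qed

theorem Hadamard_det_le: "pd_matrix S \<Longrightarrow> det S \<le> (\<Prod>i\<in>UNIV. S $ i $ i)"
  using det_le_prod_diag_of_sparse[of UNIV S] by simp

lemma ln_det_le_trace:
  fixes S :: "real^'n^'n"
  assumes pd: "pd_matrix S" and det: "0 < det S"
  shows "ln (det S) \<le> real CARD('n) * ln (trace S / real CARD('n))"
proof -
  let ?d = "real CARD('n)"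
  define m where "m = trace S / ?d"
  have diag: "\<And>i. 0 < S $ i $ i"
    using pd_matrix_diag_pos[OF pd] .
  have m: "0 < m"
    unfolding m_def trace_def using diag by (simp add: sum_pos)
  have "ln (det S) \<le> ln (\<Prod>i\<in>UNIV. S $ i $ i)"
    using Hadamard_det_le[OF pd] det by simp
  also have "\<dots> = (\<Sum>i\<in>UNIV. ln (S $ i $ i))"
    using diag by (simp add: ln_prod less_imp_neq[symmetric])
  also have "\<dots> \<le> (\<Sum>i\<in>UNIV. ln m + (S $ i $ i / m - 1))"
  proof (rule sum_mono)
    fix i
    show "ln (S $ i $ i) \<le> ln m + (S $ i $ i / m - 1)"
      using ln_le_minus_one[of "S $ i $ i / m"] diag[of i] m by (simp add: ln_div)
  qed
  also have "\<dots> = ?d * ln m + (trace S / m - ?d)"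
    by (simp add: sum.distrib sum_subtractf sum_divide_distrib[symmetric] trace_def)
  also have "trace S / m = ?d"
    using m unfolding m_def by (simp add: field_simps)
  finally show ?thesis
    unfolding m_def by linarith
qed

section \<open>Weighted means and the softmax\<close>

lemma sum_mult_sqrt_le_sqrt_sum:
  fixes p q :: "'i \<Rightarrow> real"
  assumes "\<And>i. i \<in> X \<Longrightarrow> 0 \<le> p i" "\<And>i. i \<in> X \<Longrightarrow> 0 \<le> q i" "(\<Sum>i\<in>X. p i) = 1"
  shows "(\<Sum>i\<in>X. p i * sqrt (q i)) \<le> sqrt (\<Sum>i\<in>X. p i * q i)"
proof -
  have "(\<Sum>i\<in>X. p i * sqrt (q i)) = (\<Sum>i\<in>X. sqrt (p i) * sqrt (p i * q i))"
    by (rule sum.cong) (use assms in \<open>auto simp: real_sqrt_mult real_sqrt_mult_self\<close>)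
  moreover have "(\<Sum>i\<in>X. sqrt (p i) * sqrt (p i * q i))\<^sup>2
      \<le> (\<Sum>i\<in>X. (sqrt (p i))\<^sup>2) * (\<Sum>i\<in>X. (sqrt (p i * q i))\<^sup>2)"
    by (rule Cauchy_Schwarz_ineq_sum)
  moreover have "(\<Sum>i\<in>X. (sqrt (p i))\<^sup>2) = 1" "(\<Sum>i\<in>X. (sqrt (p i * q i))\<^sup>2) = (\<Sum>i\<in>X. p i * q i)"
    using assms by simp_all
  ultimately show ?thesis
    by (simp add: real_le_rsqrt)
qed

lemma weighted_variance_eq:
  fixes \<phi> :: "'i \<Rightarrow> real^'n"
  assumes "symmetric_matrix A" "(\<Sum>i\<in>X. p i) = 1"
  shows "(\<Sum>i\<in>X. p i * quad_form A (\<phi> i - (\<Sum>i\<in>X. p i *\<^sub>R \<phi> i)))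
    = (\<Sum>i\<in>X. p i * quad_form A (\<phi> i)) - quad_form A (\<Sum>i\<in>X. p i *\<^sub>R \<phi> i)"
proof -
  define E where "E = (\<Sum>i\<in>X. p i *\<^sub>R \<phi> i)"
  have "(\<Sum>i\<in>X. p i * quad_form A (\<phi> i - E))
      = (\<Sum>i\<in>X. p i * quad_form A (\<phi> i) - 2 * (p i * (\<phi> i \<bullet> (A *v E))) + p i * quad_form A E)"
    by (rule sum.cong) (simp_all add: quad_form_diff[OF assms(1)] algebra_simps)
  also have "\<dots> = (\<Sum>i\<in>X. p i * quad_form A (\<phi> i)) - 2 * (\<Sum>i\<in>X. p i * (\<phi> i \<bullet> (A *v E)))
      + (\<Sum>i\<in>X. p i) * quad_form A E"
    by (simp add: sum.distrib sum_subtractf sum_distrib_left sum_distrib_right)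
  also have "(\<Sum>i\<in>X. p i * (\<phi> i \<bullet> (A *v E))) = quad_form A E"
    unfolding quad_form_def E_def by (simp add: inner_sum_left)
  finally show ?thesis
    using assms(2) by (simp add: E_def)
qed

lemma weighted_variance_le:
  fixes \<phi> :: "'i \<Rightarrow> real^'n"
  assumes "psd_matrix A" "(\<Sum>i\<in>X. p i) = 1"
  shows "(\<Sum>i\<in>X. p i * quad_form A (\<phi> i - (\<Sum>i\<in>X. p i *\<^sub>R \<phi> i))) \<le> (\<Sum>i\<in>X. p i * quad_form A (\<phi> i))"
  using weighted_variance_eq[where A=A and X=X and p=p and \<phi>=\<phi>] assms unfolding psd_matrix_def by force

lemma mult_quad_form_diff_le:
  assumes "psd_matrix A" "0 \<le> a" "0 \<le> b" "a + b \<le> 1"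
  shows "a * b * quad_form A (U - W) \<le> a * quad_form A U + b * quad_form A W"
proof -
  have sym: "symmetric_matrix A" and nonneg: "\<And>x. 0 \<le> quad_form A x"
    using assms(1) psd_matrix_def by auto
  have "(a + b) * (a * quad_form A U + b * quad_form A W) - a * b * quad_form A (U - W)
      = quad_form A (a *\<^sub>R U + b *\<^sub>R W)"
    by (simp add: quad_form_diff[OF sym] quad_form_add[OF sym] quad_form_scaleR
        matrix_vector_mult_scaleR power2_eq_square algebra_simps)
  then have "a * b * quad_form A (U - W) \<le> (a + b) * (a * quad_form A U + b * quad_form A W)"
    using nonneg by (metis diff_ge_0_iff_ge)
  also have "\<dots> \<le> a * quad_form A U + b * quad_form A W"
    using assms nonneg by (simp add: mult_left_le_one_le)
  finally show ?thesis .
qed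

lemma mult_prob_quad_form_le_variance:
  fixes \<phi> :: "'i \<Rightarrow> real^'n"
  assumes A: "psd_matrix A" and X: "finite X" and p: "\<And>i. i \<in> X \<Longrightarrow> 0 \<le> p i"
    and sum_p: "(\<Sum>i\<in>X. p i) = 1" and jz: "j \<in> X" "z \<in> X" "j \<noteq> z"
  shows "p j * p z * quad_form A (\<phi> j - \<phi> z)
    \<le> (\<Sum>i\<in>X. p i * quad_form A (\<phi> i - (\<Sum>i\<in>X. p i *\<^sub>R \<phi> i)))"
proof -
  define E where "E = (\<Sum>i\<in>X. p i *\<^sub>R \<phi> i)"
  have nonneg: "\<And>i. i \<in> X \<Longrightarrow> 0 \<le> p i * quad_form A (\<phi> i - E)"
    using A p by (simp add: psd_matrix_def)
  have "p j + p z = (\<Sum>i\<in>{j, z}. p i)"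
    using jz by simp
  also have "\<dots> \<le> 1"
    unfolding sum_p[symmetric] by (rule sum_mono2[OF X]) (use jz p in auto)
  finally have "p j * p z * quad_form A ((\<phi> j - E) - (\<phi> z - E))
      \<le> p j * quad_form A (\<phi> j - E) + p z * quad_form A (\<phi> z - E)"
    using jz p by (intro mult_quad_form_diff_le[OF A]) auto
  also have "\<dots> = (\<Sum>i\<in>{j, z}. p i * quad_form A (\<phi> i - E))"
    using jz by simp
  also have "\<dots> \<le> (\<Sum>i\<in>X. p i * quad_form A (\<phi> i - E))"
    by (rule sum_mono2[OF X]) (use jz nonneg in auto)
  finally show ?thesis
    by (simp add: E_def)
qed

lemma wnorm_mean_le:
  assumes "psd_matrix A" "\<And>i. i \<in> X \<Longrightarrow> 0 \<le> p i" "(\<Sum>i\<in>X. p i) = 1"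
    "\<And>i. i \<in> X \<Longrightarrow> wnorm A (\<phi> i) \<le> M"
  shows "wnorm A (\<Sum>i\<in>X. p i *\<^sub>R \<phi> i) \<le> M"
proof -
  have "wnorm A (\<Sum>i\<in>X. p i *\<^sub>R \<phi> i) \<le> (\<Sum>i\<in>X. \<bar>p i\<bar> * wnorm A (\<phi> i))"
    by (rule wnorm_sum_le[OF assms(1)])
  also have "\<dots> \<le> (\<Sum>i\<in>X. p i * M)"
    using assms by (intro sum_mono) (auto intro: mult_left_mono)
  finally show ?thesis
    using assms(3) by (simp add: sum_distrib_right[symmetric])
qed

lemma wnorm_mean_diff_le:
  assumes "psd_matrix A" "\<And>i. i \<in> X \<Longrightarrow> wnorm A (\<phi> i) \<le> M"
  shows "wnorm A ((\<Sum>i\<in>X. p i *\<^sub>R \<phi> i) - (\<Sum>i\<in>X. p' i *\<^sub>R \<phi> i)) \<le> M * (\<Sum>i\<in>X. \<bar>p i - p' i\<bar>)"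
proof -
  have "wnorm A ((\<Sum>i\<in>X. p i *\<^sub>R \<phi> i) - (\<Sum>i\<in>X. p' i *\<^sub>R \<phi> i))
      = wnorm A (\<Sum>i\<in>X. (p i - p' i) *\<^sub>R \<phi> i)"
    by (simp add: sum_subtractf scaleR_left_diff_distrib)
  also have "\<dots> \<le> (\<Sum>i\<in>X. \<bar>p i - p' i\<bar> * wnorm A (\<phi> i))"
    by (rule wnorm_sum_le[OF assms(1)])
  also have "\<dots> \<le> (\<Sum>i\<in>X. \<bar>p i - p' i\<bar> * M)"
    using assms(2) by (intro sum_mono mult_left_mono) auto
  finally show ?thesis
    by (simp add: sum_distrib_left mult.commute)
qed

lemma sum_mult_le_add_l1_dist:
  fixes p p' f :: "'i \<Rightarrow> real"
  assumes "(\<Sum>i\<in>X. p i) = 1" "(\<Sum>i\<in>X. p' i) = 1" "\<And>i. i \<in> X \<Longrightarrow> \<bar>f i - M\<bar> \<le> M"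
  shows "(\<Sum>i\<in>X. p i * f i) \<le> (\<Sum>i\<in>X. p' i * f i) + M * (\<Sum>i\<in>X. \<bar>p i - p' i\<bar>)"
proof -
  have "(\<Sum>i\<in>X. (p i - p' i) * (f i - M))
      = (\<Sum>i\<in>X. p i * f i) - (\<Sum>i\<in>X. p' i * f i) - M * ((\<Sum>i\<in>X. p i) - (\<Sum>i\<in>X. p' i))"
    by (simp add: algebra_simps sum_subtractf sum.distrib sum_distrib_left)
  then have "(\<Sum>i\<in>X. p i * f i) - (\<Sum>i\<in>X. p' i * f i) = (\<Sum>i\<in>X. (p i - p' i) * (f i - M))"
    using assms(1,2) by simp
  also have "\<dots> \<le> (\<Sum>i\<in>X. \<bar>p i - p' i\<bar> * M)"
  proof (rule sum_mono)
    fix i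
    assume "i \<in> X"
    have "(p i - p' i) * (f i - M) \<le> \<bar>p i - p' i\<bar> * \<bar>f i - M\<bar>"
      by (metis abs_ge_self abs_mult)
    then show "(p i - p' i) * (f i - M) \<le> \<bar>p i - p' i\<bar> * M"
      using assms(3)[OF \<open>i \<in> X\<close>] by (meson abs_ge_zero mult_left_mono order_trans)
  qed
  finally show ?thesis
    by (simp add: sum_distrib_left mult.commute)
qed

text \<open>Moving the weights from \<open>p'\<close> to \<open>p\<close> costs \<open>M\<close> per unit of \<open>\<ell>\<^sub>1\<close> distance, since the deviations
  lie in \<open>[0, 2M]\<close>; moving the mean costs another \<open>M\<close> per unit.\<close>

lemma mean_deviation_le:
  fixes \<phi> :: "'i \<Rightarrow> real^'n"
  assumes A: "psd_matrix A"
    and p: "\<And>i. i \<in> X \<Longrightarrow> 0 \<le> p i" "(\<Sum>i\<in>X. p i) = 1"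
    and p': "\<And>i. i \<in> X \<Longrightarrow> 0 \<le> p' i" "(\<Sum>i\<in>X. p' i) = 1"
    and M: "\<And>i. i \<in> X \<Longrightarrow> wnorm A (\<phi> i) \<le> M"
  shows "(\<Sum>i\<in>X. p i * wnorm A (\<phi> i - (\<Sum>i\<in>X. p i *\<^sub>R \<phi> i)))
     \<le> (\<Sum>i\<in>X. p' i * wnorm A (\<phi> i - (\<Sum>i\<in>X. p' i *\<^sub>R \<phi> i))) + 2 * M * (\<Sum>i\<in>X. \<bar>p i - p' i\<bar>)"
proof -
  define E where "E = (\<Sum>i\<in>X. p i *\<^sub>R \<phi> i)"
  define E' where "E' = (\<Sum>i\<in>X. p' i *\<^sub>R \<phi> i)"
  define D where "D = (\<Sum>i\<in>X. \<bar>p i - p' i\<bar>)"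
  let ?N = "wnorm A"
  have NE: "?N E \<le> M"
    unfolding E_def by (rule wnorm_mean_le[OF A p M])
  have "\<bar>?N (\<phi> i - E) - M\<bar> \<le> M" if "i \<in> X" for i
  proof -
    have "?N (\<phi> i - E) \<le> ?N (\<phi> i) + ?N E"
      using wnorm_triangle[OF A, of "\<phi> i" "- E"] wnorm_minus_commute[of A 0 E] by simp
    then show ?thesis
      using wnorm_nonneg[OF A, of "\<phi> i - E"] M[OF that] NE by (simp add: abs_le_iff)
  qed
  then have "(\<Sum>i\<in>X. p i * ?N (\<phi> i - E)) \<le> (\<Sum>i\<in>X. p' i * ?N (\<phi> i - E)) + M * D"
    unfolding D_def by (rule sum_mult_le_add_l1_dist[OF p(2) p'(2)])
  also have "(\<Sum>i\<in>X. p' i * ?N (\<phi> i - E)) \<le> (\<Sum>i\<in>X. p' i * (?N (\<phi> i - E') + ?N (E' - E)))"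
    using p'(1) wnorm_triangle[OF A, of "\<phi> _ - E'" "E' - E"] by (intro sum_mono mult_left_mono) auto
  also have "\<dots> = (\<Sum>i\<in>X. p' i * ?N (\<phi> i - E')) + ?N (E - E')"
    using p'(2) by (simp add: algebra_simps sum.distrib sum_distrib_right[symmetric] wnorm_minus_commute)
  also have "?N (E - E') \<le> M * D"
    unfolding E_def E'_def D_def by (rule wnorm_mean_diff_le[OF A M])
  finally show ?thesis
    by (simp add: E_def E'_def D_def)
qed

lemma abs_diff_mult_le_chord:
  fixes m M w W :: real
  assumes "m \<le> w" "w \<le> M" "m \<le> W" "W \<le> M"
  shows "\<bar>w - W\<bar> * (M - m) \<le> (W - m) * (M - m) + (w - m) * (M + m - 2 * W)"
proof (cases "W \<le> w")
  case True
  have "(W - m) * (M - m) + (w - m) * (M + m - 2 * W) - \<bar>w - W\<bar> * (M - m) = 2 * ((W - m) * (M - w))"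
    using True by (simp add: algebra_simps)
  then show ?thesis
    using assms mult_nonneg_nonneg[of "W - m" "M - w"] by linarith
next
  case False
  have "(W - m) * (M - m) + (w - m) * (M + m - 2 * W) - \<bar>w - W\<bar> * (M - m) = 2 * ((w - m) * (M - W))"
    using False by (simp add: algebra_simps)
  then show ?thesis
    using assms mult_nonneg_nonneg[of "w - m" "M - W"] by linarith
qed

text \<open>A Bhatia--Davis type bound, obtained by averaging the chord bound above.\<close>

lemma mean_abs_deviation_le:
  fixes q w :: "'i \<Rightarrow> real"
  assumes q: "\<And>i. i \<in> X \<Longrightarrow> 0 \<le> q i" "(\<Sum>i\<in>X. q i) = 1"
    and w: "\<And>i. i \<in> X \<Longrightarrow> m \<le> w i" "\<And>i. i \<in> X \<Longrightarrow> w i \<le> M"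
  defines "W \<equiv> (\<Sum>i\<in>X. q i * w i)"
  shows "(\<Sum>i\<in>X. q i * \<bar>w i - W\<bar>) * (M - m) \<le> 2 * ((W - m) * (M - W))"
proof -
  have "m \<le> W"
    unfolding W_def using q w sum_mono[of X "\<lambda>i. q i * m" "\<lambda>i. q i * w i"]
    by (simp add: sum_distrib_right[symmetric] mult_left_mono)
  moreover have "W \<le> M"
    unfolding W_def using q w sum_mono[of X "\<lambda>i. q i * w i" "\<lambda>i. q i * M"]
    by (simp add: sum_distrib_right[symmetric] mult_left_mono)
  ultimately have "(\<Sum>i\<in>X. q i * \<bar>w i - W\<bar>) * (M - m)
      \<le> (\<Sum>i\<in>X. q i * ((W - m) * (M - m) + (w i - m) * (M + m - 2 * W)))"
    unfolding sum_distrib_right mult.assoc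
    using q w abs_diff_mult_le_chord by (intro sum_mono mult_left_mono) auto
  also have "\<dots> = (W - m) * (M - m) * (\<Sum>i\<in>X. q i)
      + (M + m - 2 * W) * ((\<Sum>i\<in>X. q i * w i) - m * (\<Sum>i\<in>X. q i))"
    by (simp add: algebra_simps sum.distrib sum_subtractf sum_distrib_left sum_distrib_right)
  also have "\<dots> = 2 * ((W - m) * (M - W))"
    unfolding q(2) W_def[symmetric] by (simp add: algebra_simps)
  finally show ?thesis .
qed

lemma deviation_product_le:
  fixes s W :: real
  assumes s: "1 < s"
  shows "(W - 1 / s) * (s - W) \<le> W * (s - 1) * (s - 1 / s) / (s + 1)"
proof -
  have "s * ((W - 1 / s) * (s - W) * (s + 1)) = (W * s - 1) * (s - W) * (s + 1)"
    using s by (simp add: field_simps)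
  also have "\<dots> = W * (s - 1) * (s * s - 1) - (s + 1) * s * (W - 1)\<^sup>2"
    by (simp add: algebra_simps power2_eq_square)
  also have "\<dots> \<le> W * (s - 1) * (s * s - 1)"
    using s by simp
  also have "\<dots> = s * (W * (s - 1) * (s - 1 / s))"
    using s by (simp add: field_simps)
  finally have "(W - 1 / s) * (s - W) * (s + 1) \<le> W * (s - 1) * (s - 1 / s)"
    using s by (simp add: mult_le_cancel_left_pos)
  then show ?thesis
    using s by (simp add: pos_le_divide_eq)
qed

lemma mean_abs_deviation_le_of_ratio_bound:
  fixes q w :: "'i \<Rightarrow> real"
  assumes q: "\<And>i. i \<in> X \<Longrightarrow> 0 \<le> q i" "(\<Sum>i\<in>X. q i) = 1"
    and s: "1 \<le> s" and w: "\<And>i. i \<in> X \<Longrightarrow> 1 / s \<le> w i" "\<And>i. i \<in> X \<Longrightarrow> w i \<le> s"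
  defines "W \<equiv> (\<Sum>i\<in>X. q i * w i)"
  shows "(\<Sum>i\<in>X. q i * \<bar>w i - W\<bar>) \<le> 2 * W * (s - 1) / (s + 1)"
proof (cases "s = 1")
  case True
  then have "\<And>i. i \<in> X \<Longrightarrow> w i = 1"
    using w by force
  then show ?thesis
    using q(2) True by (simp add: W_def)
next
  case False
  then have "1 < s"
    using s by simp
  then have gap: "0 < s - 1 / s"
    by (smt (verit) divide_less_eq_1_pos)
  have "(\<Sum>i\<in>X. q i * \<bar>w i - W\<bar>) * (s - 1 / s) \<le> 2 * ((W - 1 / s) * (s - W))"
    unfolding W_def by (rule mean_abs_deviation_le[where m="1 / s" and M=s, OF q w])
  also have "\<dots> \<le> (2 * W * (s - 1) / (s + 1)) * (s - 1 / s)"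
    using deviation_product_le[OF \<open>1 < s\<close>, of W] by simp
  finally show ?thesis
    using gap by (rule mult_right_le_imp_le)
qed

lemma exp_minus_one_div_exp_plus_one_le:
  assumes "0 \<le> (e::real)"
  shows "(exp e - 1) / (exp e + 1) \<le> e"
proof -
  have "(1 - e) * exp e \<le> exp (- e) * exp e"
    using exp_ge_add_one_self[of "- e"] by (simp add: mult_right_mono)
  then have "exp e - 1 \<le> e * exp e"
    by (simp add: exp_minus algebra_simps)
  also have "\<dots> \<le> e * (exp e + 1)"
    using assms by (simp add: algebra_simps)
  finally show ?thesis
    by (simp add: divide_le_eq add_pos_pos)
qed

text \<open>Writing \<open>softmax(u) = q w / W\<close> with \<open>q = softmax(u')\<close>, \<open>w = exp (u - u')\<close> and
  \<open>W = \<Sum> q w\<close> reduces the distance to the mean absolute deviation of \<open>w \<in> [e\<^sup>-\<^sup>e, e\<^sup>e]\<close> under \<open>q\<close>.\<close>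

lemma softmax_l1_dist_le:
  fixes u u' :: "'i \<Rightarrow> real"
  assumes X: "finite X" "X \<noteq> {}" and d: "\<And>i. i \<in> X \<Longrightarrow> \<bar>u i - u' i\<bar> \<le> e"
  shows "(\<Sum>i\<in>X. \<bar>exp (u i) / (\<Sum>j\<in>X. exp (u j)) - exp (u' i) / (\<Sum>j\<in>X. exp (u' j))\<bar>) \<le> 2 * e"
proof -
  define Z where "Z = (\<Sum>j\<in>X. exp (u j))"
  define Z' where "Z' = (\<Sum>j\<in>X. exp (u' j))"
  define q where "q i = exp (u' i) / Z'" for i
  define w where "w i = exp (u i - u' i)" for i
  define W where "W = (\<Sum>i\<in>X. q i * w i)"
  have Z: "0 < Z" "0 < Z'"
    unfolding Z_def Z'_def using X by (auto intro: sum_pos)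
  have e: "0 \<le> e"
    using X d by (meson abs_ge_zero all_not_in_conv order_trans)
  have q: "\<And>i. 0 \<le> q i" "(\<Sum>i\<in>X. q i) = 1"
    unfolding q_def Z'_def using Z by (simp_all add: sum_divide_distrib[symmetric] Z'_def)
  have "W = Z / Z'"
    unfolding W_def q_def w_def Z_def by (simp add: sum_divide_distrib[symmetric] exp_diff field_simps)
  then have W_pos: "0 < W"
    using Z by simp
  have "\<bar>exp (u i) / Z - exp (u' i) / Z'\<bar> = q i * \<bar>w i - W\<bar> / W" for i
    using Z q(1)[of i] by (simp add: \<open>W = Z / Z'\<close> q_def w_def exp_diff abs_mult abs_divide field_simps)
  then have dist: "(\<Sum>i\<in>X. \<bar>exp (u i) / Z - exp (u' i) / Z'\<bar>) = (\<Sum>i\<in>X. q i * \<bar>w i - W\<bar>) / W"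
    by (simp add: sum_divide_distrib)
  have "exp (- e) \<le> w i" "w i \<le> exp e" if "i \<in> X" for i
    using d[OF that] unfolding w_def by (simp_all add: abs_le_iff)
  then have "(\<Sum>i\<in>X. q i * \<bar>w i - W\<bar>) \<le> 2 * W * (exp e - 1) / (exp e + 1)"
    unfolding W_def using e q
    by (intro mean_abs_deviation_le_of_ratio_bound) (auto simp: exp_minus inverse_eq_divide)
  then have "(\<Sum>i\<in>X. q i * \<bar>w i - W\<bar>) / W \<le> 2 * ((exp e - 1) / (exp e + 1))"
    using W_pos by (simp add: divide_le_eq mult.commute mult.left_commute)
  also have "\<dots> \<le> 2 * e"
    using exp_minus_one_div_exp_plus_one_le[OF e] by linarith
  finally show ?thesis
    using dist unfolding Z_def Z'_def by simp
qed

section \<open>The elliptical potential\<close>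

locale rank_one_updates =
  fixes G :: "nat \<Rightarrow> real^'n^'n" and X :: "nat \<Rightarrow> 'j set" and v :: "nat \<Rightarrow> 'j \<Rightarrow> real^'n"
    and lam :: real and T :: nat
  assumes G_1: "G 1 = mat lam" and lam_pos: "0 < lam" and finite_X: "\<And>t. finite (X t)"
    and G_Suc: "\<And>t. 1 \<le> t \<Longrightarrow> t \<le> T \<Longrightarrow> G (Suc t) = G t + (\<Sum>j\<in>X t. outer (v t j) (v t j))"
begin

definition potential :: "nat \<Rightarrow> real" where
  "potential t = (\<Sum>j\<in>X t. quad_form (matrix_inv (G t)) (v t j))"

lemma coercive_G: "1 \<le> t \<Longrightarrow> t \<le> Suc T \<Longrightarrow> coercive_matrix lam (G t)"
proof (induction t rule: dec_induct)
  case base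
  show ?case
    unfolding G_1 by (rule coercive_matrix_mat[OF lam_pos])
next
  case (step n)
  then show ?case
    by (simp add: G_Suc coercive_add_sum_outer)
qed

lemma potential_nonneg: "1 \<le> t \<Longrightarrow> t \<le> Suc T \<Longrightarrow> 0 \<le> potential t"
  unfolding potential_def using coercive_imp_psd_inv[OF coercive_G]
  by (auto simp: psd_matrix_def intro: sum_nonneg)

lemma det_G_lower_bound_pos: "t \<le> Suc T \<Longrightarrow> 0 < lam ^ CARD('n) * (\<Prod>\<tau>\<in>{1..<t}. 1 + potential \<tau>)"
  using lam_pos potential_nonneg by (intro mult_pos_pos prod_pos) (auto simp: add_pos_nonneg)

lemma det_G_ge: "1 \<le> t \<Longrightarrow> t \<le> Suc T \<Longrightarrow> lam ^ CARD('n) * (\<Prod>\<tau>\<in>{1..<t}. 1 + potential \<tau>) \<le> det (G t)"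
proof (induction t rule: dec_induct)
  case base
  have "det (mat lam :: real^'n^'n) = lam ^ CARD('n)"
    by (subst det_diagonal) (auto simp: mat_def)
  then show ?case
    unfolding G_1 by simp
next
  case (step n)
  have n: "1 \<le> n" "n \<le> T"
    using step by auto
  have det_pos: "0 < det (G n)"
    using step det_G_lower_bound_pos[of n] by linarith
  have "lam ^ CARD('n) * (\<Prod>\<tau>\<in>{1..<Suc n}. 1 + potential \<tau>)
      = lam ^ CARD('n) * (\<Prod>\<tau>\<in>{1..<n}. 1 + potential \<tau>) * (1 + potential n)"
    using n by (simp add: prod.atLeastLessThan_Suc)
  also have "\<dots> \<le> det (G n) * (1 + potential n)"
    using step potential_nonneg[of n] by (intro mult_right_mono) auto
  also have "\<dots> \<le> det (G (Suc n))"
    unfolding potential_def G_Suc[OF n]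
    using det_add_sum_outer_ge[OF coercive_G[of n] det_pos finite_X] n by simp
  finally show ?case .
qed

lemma det_G_pos: "1 \<le> t \<Longrightarrow> t \<le> Suc T \<Longrightarrow> 0 < det (G t)"
  using det_G_ge det_G_lower_bound_pos by (meson order_less_le_trans)

lemma det_mul_quad_form_inv_G_mono:
  assumes "1 \<le> t" "t \<le> t'" "t' \<le> Suc T"
  shows "det (G t) * quad_form (matrix_inv (G t)) z \<le> det (G t') * quad_form (matrix_inv (G t')) z"
  using assms(2,3)
proof (induction t' rule: dec_induct)
  case (step t')
  then show ?case
    using assms(1) coercive_G[of t'] det_G_pos[of t']
      det_mul_quad_form_inv_le_add_sum_outer[of lam "G t'" "X t'" z "v t'", OF _ _ finite_X]
    by (simp add: G_Suc)
qed simp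

lemma quad_form_inv_G_Suc_le:
  assumes "1 \<le> t" "t \<le> T"
  shows "quad_form (matrix_inv (G (Suc t))) z \<le> quad_form (matrix_inv (G t)) z"
proof (rule quad_form_inv_antimono[OF coercive_G coercive_G])
  fix y
  show "quad_form (G t) y \<le> quad_form (G (Suc t)) y"
    using assms by (simp add: G_Suc quad_form_add_sum_outer sum_nonneg)
qed (use assms in auto)

end

lemma half_le_ln_one_plus:
  fixes x :: real
  assumes "0 \<le> x" "x \<le> 1"
  shows "x / 2 \<le> ln (1 + x)"
proof -
  have "ln (1 / (1 + x)) \<le> 1 / (1 + x) - 1"
    using assms by (intro ln_le_minus_one) simp
  then have "x / (1 + x) \<le> ln (1 + x)"
    using assms by (simp add: ln_div field_simps)
  moreover have "x / 2 \<le> x / (1 + x)"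
    using assms by (intro divide_left_mono) auto
  ultimately show ?thesis
    by linarith
qed

lemma trace_outer: "trace (outer v v) = v \<bullet> (v :: real^'n)"
  by (simp add: trace_def outer_def inner_vec_def)

lemma trace_sum: "trace (\<Sum>i\<in>X. A i) = (\<Sum>i\<in>X. trace (A i :: real^'n^'n))"
  by (simp add: trace_def sum.swap[of _ UNIV])

locale bounded_rank_one_updates = rank_one_updates G X v lam T
  for G :: "nat \<Rightarrow> real^'n^'n" and X :: "nat \<Rightarrow> 'j set" and v lam T +
  fixes L :: real
  assumes increment_bound: "\<And>t. 1 \<le> t \<Longrightarrow> t \<le> T \<Longrightarrow> (\<Sum>j\<in>X t. v t j \<bullet> v t j) \<le> L\<^sup>2"
    and L_le_lam: "L\<^sup>2 \<le> lam"
begin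

lemma potential_le_one:
  assumes "1 \<le> t" "t \<le> T"
  shows "potential t \<le> 1"
proof -
  have "potential t \<le> (\<Sum>j\<in>X t. (v t j \<bullet> v t j) / lam)"
    unfolding potential_def using assms coercive_G[of t] by (intro sum_mono quad_form_inv_le) auto
  also have "\<dots> \<le> L\<^sup>2 / lam"
    using increment_bound[OF assms] lam_pos by (simp add: sum_divide_distrib[symmetric] divide_right_mono)
  also have "\<dots> \<le> 1"
    using L_le_lam lam_pos by simp
  finally show ?thesis .
qed

lemma trace_G_le: "1 \<le> t \<Longrightarrow> t \<le> Suc T \<Longrightarrow> trace (G t) \<le> real CARD('n) * lam + real (t - 1) * L\<^sup>2"
proof (induction t rule: dec_induct)
  case base
  then show ?case
    unfolding G_1 by (simp add: trace_def mat_def)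
next
  case (step n)
  have "trace (G (Suc n)) = trace (G n) + (\<Sum>j\<in>X n. v n j \<bullet> v n j)"
    using step by (simp add: G_Suc trace_add trace_sum trace_outer)
  then show ?case
    using step increment_bound[of n] by (simp add: algebra_simps of_nat_diff)
qed

lemma sum_ln_one_plus_potential_le:
  "(\<Sum>t=1..T. ln (1 + potential t)) \<le> real CARD('n) * ln (1 + real T * L\<^sup>2 / (lam * real CARD('n)))"
proof -
  let ?d = "real CARD('n)" and ?P = "\<Prod>t\<in>{1..<Suc T}. 1 + potential t"
  have P: "0 < ?P"
    using potential_nonneg by (intro prod_pos) (simp add: add_pos_nonneg)
  have "ln ?P = (\<Sum>t\<in>{1..<Suc T}. ln (1 + potential t))"
  proof (rule ln_prod)
    fix t
    assume "t \<in> {1..<Suc T}"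
    then show "1 + potential t \<noteq> 0"
      using potential_nonneg[of t] by auto
  qed simp
  moreover have "ln (lam ^ CARD('n) * ?P) = ln (lam ^ CARD('n)) + ln ?P"
    using lam_pos P by (intro ln_mult_pos) auto
  ultimately have "?d * ln lam + (\<Sum>t=1..T. ln (1 + potential t)) = ln (lam ^ CARD('n) * ?P)"
    by (simp add: ln_realpow atLeastLessThanSuc_atLeastAtMost)
  also have "\<dots> \<le> ln (det (G (Suc T)))"
    using det_G_ge[of "Suc T"] det_G_lower_bound_pos[of "Suc T"] by (intro ln_mono) auto
  also have "\<dots> \<le> ?d * ln (trace (G (Suc T)) / ?d)"
    using coercive_imp_pd[OF coercive_G] det_G_pos by (intro ln_det_le_trace) auto
  also have "\<dots> \<le> ?d * ln ((?d * lam + real T * L\<^sup>2) / ?d)"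
    using trace_G_le[of "Suc T"] lam_pos coercive_imp_pd[OF coercive_G, of "Suc T"]
      pd_matrix_diag_pos[of "G (Suc T)"]
    by (auto simp: trace_def sum_pos divide_right_mono intro!: mult_left_mono ln_mono)
  also have "(?d * lam + real T * L\<^sup>2) / ?d = lam * (1 + real T * L\<^sup>2 / (lam * ?d))"
    using lam_pos by (simp add: field_simps)
  also have "?d * ln \<dots> = ?d * ln lam + ?d * ln (1 + real T * L\<^sup>2 / (lam * ?d))"
  proof -
    have "0 < 1 + real T * L\<^sup>2 / (lam * ?d)"
      using lam_pos by (simp add: add_pos_nonneg)
    then show ?thesis
      using ln_mult_pos[OF lam_pos] by (metis distrib_left)
  qed
  finally show ?thesis
    by simp
qed

theorem elliptical_potential:
  "(\<Sum>t=1..T. potential t) \<le> 2 * real CARD('n) * ln (1 + real T * L\<^sup>2 / (lam * real CARD('n)))"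
proof -
  have "(\<Sum>t=1..T. potential t) \<le> (\<Sum>t=1..T. 2 * ln (1 + potential t))"
    using potential_nonneg potential_le_one half_le_ln_one_plus by (intro sum_mono) force
  then show ?thesis
    using sum_ln_one_plus_potential_le by (simp add: sum_distrib_left[symmetric])
qed

end

section \<open>Episodes\<close>

lemma next_start_gt: "tk \<le> T \<Longrightarrow> tk < next_start Sig T tk"
  unfolding next_start_def by (auto intro: LeastI2_ex)

lemma next_start_le: "next_start Sig T tk \<le> Suc T"
  unfolding next_start_def by (auto intro: Least_le[THEN order_trans])

lemma next_start_beyond: "T < tk \<Longrightarrow> next_start Sig T tk = Suc T"
  by (auto simp: next_start_def)

lemma ep_start_Suc: "1 \<le> k \<Longrightarrow> ep_start Sig T (Suc k) = next_start Sig T (ep_start Sig T k)"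
  by (cases k) (auto simp: ep_start_def)

lemma ep_start_1: "ep_start Sig T (Suc 0) = 1"
  by (simp add: ep_start_def)

lemma next_start_pos: "0 < next_start Sig T tk"
  using next_start_gt[of tk T Sig] next_start_beyond[of T tk Sig] by (cases "tk \<le> T") auto

lemma ep_start_pos: "0 < ep_start Sig T k"
  unfolding ep_start_def by (cases "k - 1") (simp_all add: next_start_pos)

lemma ep_start_le: "ep_start Sig T k \<le> Suc T"
  unfolding ep_start_def by (cases "k - 1") (simp_all add: next_start_le)

lemma ep_start_le_Suc: "ep_start Sig T k \<le> ep_start Sig T (Suc k)"
proof (cases "1 \<le> k")
  case True
  then show ?thesis
    using next_start_gt[of "ep_start Sig T k" T Sig] next_start_beyond[of T "ep_start Sig T k" Sig]
      ep_start_le[of Sig T k]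
    by (cases "ep_start Sig T k \<le> T") (auto simp: ep_start_Suc)
next
  case False
  then have "k = 0"
    by simp
  then show ?thesis
    by (simp add: ep_start_def)
qed

lemma in_episode:
  assumes "1 \<le> k" "ep_start Sig T k \<le> t" "t < ep_start Sig T (Suc k)"
  shows "t \<le> T" and "ep_start Sig T k < t \<Longrightarrow> det (Sig t) \<le> 2 * det (Sig (ep_start Sig T k))"
proof -
  define tk where "tk = ep_start Sig T k"
  let ?P = "\<lambda>t. tk < t \<and> t \<le> T \<and> det (Sig t) > 2 * det (Sig tk)"
  have t: "t < next_start Sig T tk"
    using assms(1,3) by (simp add: tk_def ep_start_Suc)
  show "t \<le> T"
  proof (cases "\<exists>t. ?P t")
    case True
    then obtain w where "?P w"
      by blast
    then have "(LEAST t. ?P t) \<le> w"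
      by (rule Least_le)
    then show ?thesis
      using t True \<open>?P w\<close> unfolding next_start_def by simp
  next
    case False
    then have "next_start Sig T tk = T + 1"
      unfolding next_start_def by (rule if_not_P)
    then show ?thesis
      using t by simp
  qed
  show "det (Sig t) \<le> 2 * det (Sig tk)" if "tk < t"
    using t not_less_Least[of t ?P] \<open>t \<le> T\<close> that unfolding next_start_def
    by (cases "\<exists>t. ?P t") (auto simp: not_less)
qed

lemma sum_over_episodes:
  "(\<Sum>k = 1..K. \<Sum>t\<in>{ep_start Sig T k..<ep_start Sig T (Suc k)}. g t)
    = (\<Sum>t\<in>{1..<ep_start Sig T (Suc K)}. g t :: real)"
proof (induction K)
  case (Suc K)
  have "{1..<ep_start Sig T (Suc K)} \<union> {ep_start Sig T (Suc K)..<ep_start Sig T (Suc (Suc K))}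
      = {1..<ep_start Sig T (Suc (Suc K))}"
    using ep_start_pos[of Sig T "Suc K"] ep_start_le_Suc[of Sig T "Suc K"] by auto
  then show ?case
    using Suc by (simp add: sum.union_disjoint[symmetric] ivl_disj_int)
qed (simp add: ep_start_1)

section \<open>The bonus of the MNL model\<close>

lemma mnl_prob_pos:
  assumes "finite (R x y)" "R x y \<noteq> {}"
  shows "0 < mnl_prob R \<phi> \<theta> x y i"
  unfolding mnl_prob_def using assms by (intro divide_pos_pos) (auto intro!: sum_pos)

lemma sum_mnl_prob:
  assumes "finite (R x y)" "R x y \<noteq> {}"
  shows "(\<Sum>i\<in>R x y. mnl_prob R \<phi> \<theta> x y i) = 1"
proof -
  have "0 < (\<Sum>s''\<in>R x y. exp (\<phi> x y s'' \<bullet> \<theta>))"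
    using assms by (auto intro: sum_pos)
  then show ?thesis
    unfolding mnl_prob_def by (simp add: sum_divide_distrib[symmetric])
qed

lemma mnl_prob_l1_dist_le:
  assumes "finite (R x y)" "R x y \<noteq> {}"
    and "\<And>i. i \<in> R x y \<Longrightarrow> \<bar>\<phi> x y i \<bullet> \<theta> - \<phi> x y i \<bullet> \<theta>'\<bar> \<le> e"
  shows "(\<Sum>i\<in>R x y. \<bar>mnl_prob R \<phi> \<theta> x y i - mnl_prob R \<phi> \<theta>' x y i\<bar>) \<le> 2 * e"
  unfolding mnl_prob_def using assms by (intro softmax_l1_dist_le) auto

text \<open>The Hessian is the covariance of the features, a sum of the rank-one terms
  \<open>p\<^sub>i (\<phi>\<^sub>i - E \<phi>) (\<phi>\<^sub>i - E \<phi>)\<^sup>T\<close>.\<close>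

definition hess_factor ::
  "('s \<Rightarrow> 'a \<Rightarrow> 's set) \<Rightarrow> ('s \<Rightarrow> 'a \<Rightarrow> 's \<Rightarrow> real^'d) \<Rightarrow> real^'d \<Rightarrow> 's \<Rightarrow> 'a \<Rightarrow> 's \<Rightarrow> real^'d" where
  "hess_factor R \<phi> \<theta> x y i = sqrt (mnl_prob R \<phi> \<theta> x y i) *\<^sub>R (\<phi> x y i - mean_feat R \<phi> \<theta> x y)"

lemma quad_form_hess_factor:
  "quad_form A (hess_factor R \<phi> \<theta> x y i) = mnl_prob R \<phi> \<theta> x y i * quad_form A (\<phi> x y i - mean_feat R \<phi> \<theta> x y)"
  unfolding hess_factor_def quad_form_scaleR by (simp add: mnl_prob_def sum_nonneg)

lemma mnl_hess_eq_sum_outer: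
  assumes "finite (R x y)" "R x y \<noteq> {}"
  shows "mnl_hess R \<phi> \<theta> x y = (\<Sum>i\<in>R x y. outer (hess_factor R \<phi> \<theta> x y i) (hess_factor R \<phi> \<theta> x y i))"
proof -
  let ?p = "mnl_prob R \<phi> \<theta> x y" and ?E = "mean_feat R \<phi> \<theta> x y"
  have "outer (hess_factor R \<phi> \<theta> x y i) (hess_factor R \<phi> \<theta> x y i)
      = ?p i *\<^sub>R outer (\<phi> x y i - ?E) (\<phi> x y i - ?E)" for i
    using mnl_prob_pos[of R x y, OF assms, of \<phi> \<theta> i]
    by (simp add: hess_factor_def outer_def vec_eq_iff algebra_simps)
  then have "(\<Sum>i\<in>R x y. outer (hess_factor R \<phi> \<theta> x y i) (hess_factor R \<phi> \<theta> x y i)) $ c $ d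
      = (\<Sum>i\<in>R x y. ?p i * ((\<phi> x y i $ c - ?E $ c) * (\<phi> x y i $ d - ?E $ d)))" for c d
    by (simp add: outer_def)
  also have "\<dots> c d = (\<Sum>i\<in>R x y. ?p i * (\<phi> x y i $ c * \<phi> x y i $ d)) - ?E $ d * (\<Sum>i\<in>R x y. ?p i * \<phi> x y i $ c)
      - ?E $ c * (\<Sum>i\<in>R x y. ?p i * \<phi> x y i $ d) + ?E $ c * ?E $ d * (\<Sum>i\<in>R x y. ?p i)" for c d
    by (simp add: algebra_simps sum.distrib sum_subtractf sum_distrib_left sum_distrib_right)
  also have "\<dots> c d = mnl_hess R \<phi> \<theta> x y $ c $ d" for c d
    using sum_mnl_prob[of R x y \<phi> \<theta>, OF assms] by (simp add: mnl_hess_def outer_def mean_feat_def)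
  finally show ?thesis
    by (simp add: vec_eq_iff)
qed

lemma sum_inner_hess_factor_le:
  assumes "finite (R x y)" "R x y \<noteq> {}" "\<And>i. i \<in> R x y \<Longrightarrow> norm (\<phi> x y i) \<le> L"
  shows "(\<Sum>i\<in>R x y. hess_factor R \<phi> \<theta> x y i \<bullet> hess_factor R \<phi> \<theta> x y i) \<le> L\<^sup>2"
proof -
  let ?p = "mnl_prob R \<phi> \<theta> x y"
  have psd: "psd_matrix (mat 1 :: real^'d^'d)"
    using coercive_imp_psd coercive_matrix_mat[of 1] by auto
  have "(\<Sum>i\<in>R x y. hess_factor R \<phi> \<theta> x y i \<bullet> hess_factor R \<phi> \<theta> x y i)
      = (\<Sum>i\<in>R x y. quad_form (mat 1) (hess_factor R \<phi> \<theta> x y i))"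
    by (simp add: quad_form_def)
  also have "\<dots> = (\<Sum>i\<in>R x y. ?p i * quad_form (mat 1) (\<phi> x y i - mean_feat R \<phi> \<theta> x y))"
    by (simp only: quad_form_hess_factor)
  also have "\<dots> \<le> (\<Sum>i\<in>R x y. ?p i * quad_form (mat 1) (\<phi> x y i))"
    unfolding mean_feat_def by (rule weighted_variance_le[OF psd sum_mnl_prob[of R x y, OF assms(1,2)]])
  also have "\<dots> \<le> (\<Sum>i\<in>R x y. ?p i * L\<^sup>2)"
    using assms mnl_prob_pos[of R x y \<phi> \<theta>, OF assms(1,2)]
    by (intro sum_mono mult_left_mono) (auto simp: quad_form_def power2_norm_eq_inner[symmetric] power_mono less_imp_le)
  finally show ?thesis
    using sum_mnl_prob[of R x y \<phi> \<theta>, OF assms(1,2)] by (simp add: sum_distrib_right[symmetric])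
qed

locale mnl_run =
  fixes R :: "'s::finite \<Rightarrow> 'a::finite \<Rightarrow> 's set"
    and \<phi> :: "'s \<Rightarrow> 'a \<Rightarrow> 's \<Rightarrow> real^'d::finite"
    and \<theta>star :: "real^'d"
    and L\<phi> L\<theta> \<kappa> lam :: real
    and \<beta> :: "nat \<Rightarrow> real"
    and s :: "nat \<Rightarrow> 's" and a :: "nat \<Rightarrow> 'a"
    and th :: "nat \<Rightarrow> real^'d" and Sig :: "nat \<Rightarrow> real^'d^'d"
    and T :: nat
  assumes A1_phi: "\<forall>x y. \<forall>z\<in>R x y. norm (\<phi> x y z) \<le> L\<phi>"
    and A1_theta: "norm \<theta>star \<le> L\<theta>"
    and kappa_pos: "0 < \<kappa>"
    and A2: "\<forall>t\<in>{1..T}. \<forall>\<theta>. norm \<theta> \<le> L\<theta> \<longrightarrow>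
               (\<forall>s'\<in>R (s t) (a t). \<forall>s''\<in>R (s t) (a t).
                  \<kappa> \<le> mnl_prob R \<phi> \<theta> (s t) (a t) s' * mnl_prob R \<phi> \<theta> (s t) (a t) s'')"
    and A3: "\<forall>x y. \<exists>z\<in>R x y. \<phi> x y z = 0"
    and lam_pos: "0 < lam"
    and lam_ge: "L\<phi>\<^sup>2 \<le> lam"
    and init_th: "th 1 = 0"
    and init_Sig: "Sig 1 = mat lam"
    and th_bounded: "\<forall>t. 1 \<le> t \<and> t < T \<longrightarrow> norm (th (Suc t)) \<le> L\<theta>"
    and Sig_step: "\<forall>t. 1 \<le> t \<and> t < T \<longrightarrow>
                    Sig (Suc t) = Sig t + mnl_hess R \<phi> (th (Suc t)) (s t) (a t)"
    and beta_pos: "\<forall>t. 0 < \<beta> t"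
    and beta_mono: "mono \<beta>"
    and conf: "\<forall>t\<in>{1..T}. wnorm (Sig t) (th t - \<theta>star) \<le> \<beta> t"
    and T_pos: "1 \<le> T"
begin

lemma R_nonempty: "R x y \<noteq> {}"
  using A3 by blast

lemma mnl_prob_nonneg: "0 \<le> mnl_prob R \<phi> \<theta> x y i"
  using mnl_prob_pos[of R x y, OF finite R_nonempty] by (rule less_imp_le)

lemma sum_mnl_prob_eq_1: "(\<Sum>i\<in>R x y. mnl_prob R \<phi> \<theta> x y i) = 1"
  using sum_mnl_prob[of R x y, OF finite R_nonempty] .

text \<open>The Gram sequence extends \<open>\<Sigma>\<close> by one step
  past the horizon, evaluated at \<open>\<theta>\<^sub>T\<close>, so that the step at time \<open>T\<close> is an update as well.\<close>

definition hess_point :: "nat \<Rightarrow> real^'d" where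
  "hess_point t = (if t < T then th (Suc t) else th T)"

definition gram :: "nat \<Rightarrow> real^'d^'d" where
  "gram t = (if t \<le> T then Sig t else Sig T + mnl_hess R \<phi> (th T) (s T) (a T))"

lemma hess_point_bounded:
  assumes "1 \<le> t" "t \<le> T"
  shows "norm (hess_point t) \<le> L\<theta>"
proof (cases "t < T")
  case True
  then show ?thesis
    using th_bounded assms by (simp add: hess_point_def)
next
  case False
  then have "t = T"
    using assms by simp
  moreover have "norm (th T) \<le> L\<theta>"
    using th_bounded[rule_format, of "T - 1"] init_th A1_theta T_pos
    by (cases "T = 1") (auto intro: order_trans[OF norm_ge_zero])
  ultimately show ?thesis
    by (simp add: hess_point_def)
qed

lemma gram_Suc:
  assumes "1 \<le> t" "t \<le> T"
  shows "gram (Suc t) = gram t + (\<Sum>j\<in>R (s t) (a t).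
    outer (hess_factor R \<phi> (hess_point t) (s t) (a t) j) (hess_factor R \<phi> (hess_point t) (s t) (a t) j))"
proof -
  have "gram (Suc t) = gram t + mnl_hess R \<phi> (hess_point t) (s t) (a t)"
  proof (cases "t < T")
    case True
    then show ?thesis
      using assms Sig_step by (simp add: gram_def hess_point_def)
  next
    case False
    then have "t = T"
      using assms by simp
    then show ?thesis
      by (simp add: gram_def hess_point_def)
  qed
  then show ?thesis
    by (simp add: mnl_hess_eq_sum_outer[of R, OF finite R_nonempty])
qed

sublocale gram: bounded_rank_one_updates gram "\<lambda>t. R (s t) (a t)"
  "\<lambda>t. hess_factor R \<phi> (hess_point t) (s t) (a t)" lam T L\<phi>
proof
  show "gram 1 = mat lam"
    using T_pos init_Sig by (simp add: gram_def)
  show "(\<Sum>j\<in>R (s t) (a t). hess_factor R \<phi> (hess_point t) (s t) (a t) j \<bullet> hess_factor R \<phi> (hess_point t) (s t) (a t) j)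
      \<le> L\<phi>\<^sup>2" for t
    using A1_phi by (intro sum_inner_hess_factor_le[of R, OF finite R_nonempty]) auto
qed (use lam_pos lam_ge gram_Suc in auto)

abbreviation potential :: "nat \<Rightarrow> real" where
  "potential \<equiv> gram.potential"

lemma potential_eq:
  "potential t = (\<Sum>i\<in>R (s t) (a t). mnl_prob R \<phi> (hess_point t) (s t) (a t) i
     * quad_form (matrix_inv (gram t)) (\<phi> (s t) (a t) i - mean_feat R \<phi> (hess_point t) (s t) (a t)))"
  by (simp add: gram.potential_def quad_form_hess_factor)

lemma Sig_eq_gram: "t \<le> T \<Longrightarrow> Sig t = gram t"
  by (simp add: gram_def)

lemma coercive_Sig: "1 \<le> t \<Longrightarrow> t \<le> T \<Longrightarrow> coercive_matrix lam (Sig t)"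
  using gram.coercive_G Sig_eq_gram by simp

lemma wnorm_inv_Sig_le_episode_start:
  assumes "1 \<le> tk" "tk \<le> t" "t \<le> T" "det (Sig t) \<le> 2 * det (Sig tk)"
  shows "wnorm (matrix_inv (Sig tk)) z \<le> sqrt 2 * wnorm (matrix_inv (Sig t)) z"
proof -
  have "det (Sig tk) * quad_form (matrix_inv (Sig tk)) z \<le> det (Sig t) * quad_form (matrix_inv (Sig t)) z"
    using gram.det_mul_quad_form_inv_G_mono[of tk t] assms by (simp add: Sig_eq_gram)
  also have "\<dots> \<le> 2 * det (Sig tk) * quad_form (matrix_inv (Sig t)) z"
    using coercive_imp_psd_inv[OF coercive_Sig[of t]] assms unfolding psd_matrix_def
    by (intro mult_right_mono) auto
  finally have "quad_form (matrix_inv (Sig tk)) z \<le> 2 * quad_form (matrix_inv (Sig t)) z"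
    using gram.det_G_pos[of tk] assms by (simp add: Sig_eq_gram)
  then show ?thesis
    by (simp add: wnorm_eq_sqrt_quad_form real_sqrt_mult[symmetric])
qed

lemma wnorm_inv_Sig_Suc_le:
  assumes "1 \<le> t" "t < T"
  shows "wnorm (matrix_inv (Sig (Suc t))) z \<le> wnorm (matrix_inv (Sig t)) z"
  using gram.quad_form_inv_G_Suc_le[of t z] assms by (simp add: wnorm_eq_sqrt_quad_form Sig_eq_gram)

lemma feature_wnorm_le:
  assumes t: "1 \<le> t" "t \<le> T" and i: "i \<in> R (s t) (a t)"
  shows "wnorm (matrix_inv (Sig t)) (\<phi> (s t) (a t) i) \<le> sqrt (potential t / \<kappa>)"
proof -
  let ?A = "matrix_inv (Sig t)" and ?f = "\<phi> (s t) (a t)"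
    and ?p = "mnl_prob R \<phi> (hess_point t) (s t) (a t)"
  obtain z where z: "z \<in> R (s t) (a t)" "?f z = 0"
    using A3 by blast
  have psd: "psd_matrix ?A"
    by (rule coercive_imp_psd_inv[OF coercive_Sig[OF t]])
  have "\<kappa> * quad_form ?A (?f i) \<le> potential t"
  proof (cases "i = z")
    case True
    then show ?thesis
      using z gram.potential_nonneg[of t] t by (simp add: quad_form_def)
  next
    case False
    have "\<kappa> * quad_form ?A (?f i) \<le> ?p i * ?p z * quad_form ?A (?f i - ?f z)"
      using A2 hess_point_bounded[OF t] t i z psd by (simp add: psd_matrix_def mult_right_mono)
    also have "\<dots> \<le> potential t"
      unfolding potential_eq mean_feat_def Sig_eq_gram[OF t(2), symmetric]
      using False i z by (intro mult_prob_quad_form_le_variance[OF psd finite]) (auto simp: mnl_prob_nonneg sum_mnl_prob_eq_1)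
    finally show ?thesis .
  qed
  then show ?thesis
    using kappa_pos by (simp add: wnorm_eq_sqrt_quad_form pos_le_divide_eq mult.commute)
qed

lemma abs_inner_estimation_error_le:
  assumes "1 \<le> t" "t \<le> T"
  shows "\<bar>x \<bullet> (th t - \<theta>star)\<bar> \<le> wnorm (matrix_inv (Sig t)) x * \<beta> T"
proof -
  have "\<bar>x \<bullet> (th t - \<theta>star)\<bar> \<le> wnorm (matrix_inv (Sig t)) x * wnorm (Sig t) (th t - \<theta>star)"
    by (rule abs_inner_le_wnorm_inv[OF coercive_Sig[OF assms]])
  also have "\<dots> \<le> wnorm (matrix_inv (Sig t)) x * \<beta> T"
    using conf assms beta_mono[THEN monoD, of t T]
      coercive_imp_psd_inv[OF coercive_Sig[OF assms]] wnorm_nonneg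
    by (intro mult_left_mono) force+
  finally show ?thesis .
qed

lemma logit_diff_le:
  assumes tk: "1 \<le> tk" "tk \<le> t" and t: "t \<le> T" and det: "det (Sig t) \<le> 2 * det (Sig tk)"
    and i: "i \<in> R (s t) (a t)"
  shows "\<bar>\<phi> (s t) (a t) i \<bullet> th tk - \<phi> (s t) (a t) i \<bullet> hess_point t\<bar>
    \<le> (1 + sqrt 2) * \<beta> T * sqrt (potential t / \<kappa>)"
proof -
  let ?f = "\<phi> (s t) (a t) i" and ?M = "sqrt (potential t / \<kappa>)"
  define t' where "t' = (if t < T then Suc t else T)"
  have t': "1 \<le> t'" "t' \<le> T" "hess_point t = th t'"
    using tk t by (auto simp: t'_def hess_point_def)
  have \<beta>: "0 \<le> \<beta> T"
    using beta_pos less_imp_le by blast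
  have M: "wnorm (matrix_inv (Sig t)) ?f \<le> ?M"
    using feature_wnorm_le[of t i] tk t i by simp
  have "wnorm (matrix_inv (Sig t')) ?f \<le> wnorm (matrix_inv (Sig t)) ?f"
    using wnorm_inv_Sig_Suc_le[of t ?f] tk t by (auto simp: t'_def)
  then have "wnorm (matrix_inv (Sig t')) ?f * \<beta> T \<le> ?M * \<beta> T"
    using M \<beta> by (meson mult_right_mono order_trans)
  then have err': "\<bar>?f \<bullet> (th t' - \<theta>star)\<bar> \<le> ?M * \<beta> T"
    using abs_inner_estimation_error_le[OF t'(1,2), of ?f] by linarith
  have "sqrt 2 * wnorm (matrix_inv (Sig t)) ?f \<le> sqrt 2 * ?M"
    using M by simp
  then have "wnorm (matrix_inv (Sig tk)) ?f \<le> sqrt 2 * ?M"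
    using wnorm_inv_Sig_le_episode_start[OF tk t det, of ?f] by linarith
  then have err: "\<bar>?f \<bullet> (th tk - \<theta>star)\<bar> \<le> sqrt 2 * ?M * \<beta> T"
    using abs_inner_estimation_error_le[of tk ?f] tk t mult_right_mono[OF _ \<beta>]
    by (meson order_trans)
  have "?f \<bullet> th tk - ?f \<bullet> hess_point t = ?f \<bullet> (th tk - \<theta>star) - ?f \<bullet> (th t' - \<theta>star)"
    unfolding t'(3) by (simp add: inner_diff_right)
  moreover have "(1 + sqrt 2) * \<beta> T * ?M = sqrt 2 * ?M * \<beta> T + ?M * \<beta> T"
    by (simp add: algebra_simps)
  ultimately show ?thesis
    using err err' abs_triangle_ineq4[of "?f \<bullet> (th tk - \<theta>star)" "?f \<bullet> (th t' - \<theta>star)"] by linarith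
qed

lemma mean_deviation_at_hess_point_le:
  assumes "1 \<le> t" "t \<le> T"
  shows "(\<Sum>i\<in>R (s t) (a t). mnl_prob R \<phi> (hess_point t) (s t) (a t) i
      * wnorm (matrix_inv (Sig t)) (\<phi> (s t) (a t) i - mean_feat R \<phi> (hess_point t) (s t) (a t)))
    \<le> sqrt (potential t)"
  unfolding wnorm_eq_sqrt_quad_form potential_eq Sig_eq_gram[OF assms(2)]
  using coercive_imp_psd_inv[OF gram.coercive_G, of t] assms mnl_prob_nonneg sum_mnl_prob_eq_1
  by (intro sum_mult_sqrt_le_sqrt_sum) (auto simp: psd_matrix_def)

lemma mult_l1_dist_mnl_prob_le:
  assumes tk: "1 \<le> tk" "tk \<le> t" and t: "t \<le> T" and det: "det (Sig t) \<le> 2 * det (Sig tk)"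
  shows "2 * sqrt (potential t / \<kappa>) * (\<Sum>i\<in>R (s t) (a t).
      \<bar>mnl_prob R \<phi> (th tk) (s t) (a t) i - mnl_prob R \<phi> (hess_point t) (s t) (a t) i\<bar>)
    \<le> 4 * (1 + sqrt 2) * \<beta> T * potential t / \<kappa>"
proof -
  define m where "m = sqrt (potential t / \<kappa>)"
  have m: "0 \<le> m" "m * m = potential t / \<kappa>"
    unfolding m_def using gram.potential_nonneg[of t] tk t kappa_pos by simp_all
  have "(\<Sum>i\<in>R (s t) (a t). \<bar>mnl_prob R \<phi> (th tk) (s t) (a t) i - mnl_prob R \<phi> (hess_point t) (s t) (a t) i\<bar>)
      \<le> 2 * ((1 + sqrt 2) * \<beta> T * m)"
    unfolding m_def using logit_diff_le[OF tk t det] by (intro mnl_prob_l1_dist_le[of R, OF finite R_nonempty])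
  then have "2 * m * (\<Sum>i\<in>R (s t) (a t). \<bar>mnl_prob R \<phi> (th tk) (s t) (a t) i - mnl_prob R \<phi> (hess_point t) (s t) (a t) i\<bar>)
      \<le> 2 * m * (2 * ((1 + sqrt 2) * \<beta> T * m))"
    using m by (intro mult_left_mono) auto
  also have "\<dots> = 4 * (1 + sqrt 2) * \<beta> T * (m * m)"
    by (simp add: algebra_simps)
  finally show ?thesis
    unfolding m(2) by (simp add: m_def)
qed

lemma mean_deviation_at_episode_start_le:
  assumes tk: "1 \<le> tk" "tk \<le> t" and t: "t \<le> T" and det: "det (Sig t) \<le> 2 * det (Sig tk)"
  shows "(\<Sum>i\<in>R (s t) (a t). mnl_prob R \<phi> (th tk) (s t) (a t) i
      * wnorm (matrix_inv (Sig t)) (\<phi> (s t) (a t) i - mean_feat R \<phi> (th tk) (s t) (a t)))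
    \<le> sqrt (potential t) + 4 * (1 + sqrt 2) * \<beta> T * potential t / \<kappa>"
proof -
  have t1: "1 \<le> t"
    using tk by simp
  have "(\<Sum>i\<in>R (s t) (a t). mnl_prob R \<phi> (th tk) (s t) (a t) i
        * wnorm (matrix_inv (Sig t)) (\<phi> (s t) (a t) i - mean_feat R \<phi> (th tk) (s t) (a t)))
      \<le> (\<Sum>i\<in>R (s t) (a t). mnl_prob R \<phi> (hess_point t) (s t) (a t) i
        * wnorm (matrix_inv (Sig t)) (\<phi> (s t) (a t) i - mean_feat R \<phi> (hess_point t) (s t) (a t)))
      + 2 * sqrt (potential t / \<kappa>) * (\<Sum>i\<in>R (s t) (a t).
        \<bar>mnl_prob R \<phi> (th tk) (s t) (a t) i - mnl_prob R \<phi> (hess_point t) (s t) (a t) i\<bar>)"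
    unfolding mean_feat_def using feature_wnorm_le[OF t1 t] mnl_prob_nonneg sum_mnl_prob_eq_1
    by (intro mean_deviation_le[OF coercive_imp_psd_inv[OF coercive_Sig[OF t1 t]]]) auto
  then show ?thesis
    using mean_deviation_at_hess_point_le[OF t1 t] mult_l1_dist_mnl_prob_le[OF tk t det] by linarith
qed

end

lemma sum_sqrt_le_sqrt_card_mult_sum:
  assumes "\<And>i. i \<in> A \<Longrightarrow> 0 \<le> x i"
  shows "(\<Sum>i\<in>A. sqrt (x i)) \<le> sqrt (real (card A) * (\<Sum>i\<in>A. x i))"
proof (rule real_le_rsqrt)
  have "(\<Sum>i\<in>A. 1 * sqrt (x i))\<^sup>2 \<le> (\<Sum>i\<in>A. 1\<^sup>2) * (\<Sum>i\<in>A. (sqrt (x i))\<^sup>2)"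
    by (rule Cauchy_Schwarz_ineq_sum)
  then show "(\<Sum>i\<in>A. sqrt (x i))\<^sup>2 \<le> real (card A) * (\<Sum>i\<in>A. x i)"
    using assms by simp
qed

context mnl_run
begin

lemma bonus_le:
  assumes tk: "1 \<le> tk" "tk \<le> t" and t: "t \<le> T" and det: "det (Sig t) \<le> 2 * det (Sig tk)"
  shows "bonus1 R \<phi> \<beta> th Sig tk (s t) (a t)
    \<le> sqrt 2 * \<beta> T * (sqrt (potential t) + 4 * (1 + sqrt 2) * \<beta> T * potential t / \<kappa>)"
proof -
  let ?p = "mnl_prob R \<phi> (th tk) (s t) (a t)" and ?E = "mean_feat R \<phi> (th tk) (s t) (a t)"
    and ?f = "\<phi> (s t) (a t)"
  have \<beta>: "0 \<le> \<beta> tk" "\<beta> tk \<le> \<beta> T"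
    using beta_pos beta_mono[THEN monoD, of tk T] tk t by (auto intro: less_imp_le)
  have "bonus1 R \<phi> \<beta> th Sig tk (s t) (a t)
      \<le> \<beta> tk * (\<Sum>i\<in>R (s t) (a t). ?p i * (sqrt 2 * wnorm (matrix_inv (Sig t)) (?f i - ?E)))"
    unfolding bonus1_def using \<beta> wnorm_inv_Sig_le_episode_start[OF tk t det]
    by (intro mult_left_mono sum_mono) (auto intro: mult_left_mono mnl_prob_nonneg)
  also have "\<dots> = \<beta> tk * sqrt 2 * (\<Sum>i\<in>R (s t) (a t). ?p i * wnorm (matrix_inv (Sig t)) (?f i - ?E))"
    by (simp add: sum_distrib_left ac_simps)
  also have "\<dots> \<le> \<beta> T * sqrt 2 * (sqrt (potential t) + 4 * (1 + sqrt 2) * \<beta> T * potential t / \<kappa>)"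
    using mean_deviation_at_episode_start_le[OF tk t det] \<beta> mnl_prob_nonneg
      coercive_imp_psd_inv[OF coercive_Sig[of t]] tk t
    by (intro mult_mono) (auto intro!: sum_nonneg mult_nonneg_nonneg wnorm_nonneg)
  finally show ?thesis
    by (simp add: ac_simps)
qed

lemma sum_bonus_bound_le:
  defines "l \<equiv> ln (1 + real T * L\<phi>\<^sup>2 / (lam * real CARD('d)))"
  shows "(\<Sum>t=1..T. sqrt 2 * \<beta> T * (sqrt (potential t) + 4 * (1 + sqrt 2) * \<beta> T * potential t / \<kappa>))
    \<le> \<beta> T * (32 * \<beta> T * real CARD('d) * l / \<kappa> + 2 * sqrt (real CARD('d) * real T * l))"
proof -
  let ?d = "real CARD('d)"
  define c where "c = 4 * (1 + sqrt 2)"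
  have \<beta>: "0 < \<beta> T"
    using beta_pos by blast
  have c: "0 \<le> c" "sqrt 2 * c * 2 \<le> 32"
    unfolding c_def using real_sqrt_le_iff[of 2 4] by (auto simp: algebra_simps)
  have l: "0 \<le> l"
    unfolding l_def using lam_pos by (intro ln_ge_zero) simp
  have pot: "(\<Sum>t=1..T. potential t) \<le> 2 * ?d * l"
    unfolding l_def by (rule gram.elliptical_potential)
  have "(\<Sum>t=1..T. sqrt (potential t)) \<le> sqrt (real T * (\<Sum>t=1..T. potential t))"
    using sum_sqrt_le_sqrt_card_mult_sum[of "{1..T}" potential] gram.potential_nonneg by simp
  also have "\<dots> \<le> sqrt (real T * (2 * ?d * l))"
    using pot by (simp add: mult_left_mono)
  also have "sqrt (real T * (2 * ?d * l)) = sqrt 2 * sqrt (?d * real T * l)"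
    by (simp add: real_sqrt_mult[symmetric] ac_simps)
  finally have "sqrt 2 * (\<Sum>t=1..T. sqrt (potential t)) \<le> sqrt 2 * (sqrt 2 * sqrt (?d * real T * l))"
    by (rule mult_left_mono) simp
  then have A: "sqrt 2 * (\<Sum>t=1..T. sqrt (potential t)) \<le> 2 * sqrt (?d * real T * l)"
    by (simp add: mult.assoc[symmetric])
  have "sqrt 2 * c * \<beta> T / \<kappa> * (\<Sum>t=1..T. potential t) \<le> sqrt 2 * c * \<beta> T / \<kappa> * (2 * ?d * l)"
    using pot \<beta> c kappa_pos by (intro mult_left_mono) auto
  also have "\<dots> = (sqrt 2 * c * 2) * (\<beta> T * ?d * l / \<kappa>)"
    by (simp add: algebra_simps)
  also have "\<dots> \<le> 32 * (\<beta> T * ?d * l / \<kappa>)"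
    using c \<beta> l kappa_pos by (intro mult_right_mono) auto
  finally have B: "sqrt 2 * c * \<beta> T / \<kappa> * (\<Sum>t=1..T. potential t) \<le> 32 * \<beta> T * ?d * l / \<kappa>"
    by simp
  have "(\<Sum>t=1..T. sqrt 2 * \<beta> T * (sqrt (potential t) + c * \<beta> T * potential t / \<kappa>))
      = \<beta> T * (sqrt 2 * (\<Sum>t=1..T. sqrt (potential t)) + sqrt 2 * c * \<beta> T / \<kappa> * (\<Sum>t=1..T. potential t))"
    by (simp add: sum.distrib sum_distrib_left sum_divide_distrib algebra_simps)
  also have "\<dots> \<le> \<beta> T * (32 * \<beta> T * ?d * l / \<kappa> + 2 * sqrt (?d * real T * l))"
    using A B \<beta> by (intro mult_left_mono) auto
  finally show ?thesis
    unfolding c_def .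
qed

end

context mnl_run
begin

theorem sum_bonus_le:
  defines "l \<equiv> ln (1 + real T * L\<phi>\<^sup>2 / (lam * real CARD('d)))"
  shows "(\<Sum>k = 1..num_episodes Sig T. \<Sum>t\<in>{ep_start Sig T k..<ep_start Sig T (Suc k)}.
      bonus1 R \<phi> \<beta> th Sig (ep_start Sig T k) (s t) (a t))
    \<le> \<beta> T * (32 * \<beta> T * real CARD('d) * l / \<kappa> + 2 * sqrt (real CARD('d) * real T * l))"
proof -
  define g where "g t = sqrt 2 * \<beta> T * (sqrt (potential t) + 4 * (1 + sqrt 2) * \<beta> T * potential t / \<kappa>)"
    for t
  let ?K = "num_episodes Sig T" and ?t = "ep_start Sig T"
  have "bonus1 R \<phi> \<beta> th Sig (?t k) (s t) (a t) \<le> g t"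
    if "k \<in> {1..?K}" "t \<in> {?t k..<?t (Suc k)}" for k t
  proof -
    have t: "?t k \<le> t" "t \<le> T"
      using that in_episode(1)[of k Sig T t] by auto
    have "det (Sig t) \<le> 2 * det (Sig (?t k))"
      using that in_episode(2)[of k Sig T t] gram.det_G_pos[of t] ep_start_pos[of Sig T k] t
      by (cases "?t k < t") (auto simp: Sig_eq_gram)
    then show ?thesis
      unfolding g_def using bonus_le ep_start_pos[of Sig T k] t by (simp add: Suc_le_eq)
  qed
  then have "(\<Sum>k = 1..?K. \<Sum>t\<in>{?t k..<?t (Suc k)}. bonus1 R \<phi> \<beta> th Sig (?t k) (s t) (a t))
      \<le> (\<Sum>k = 1..?K. \<Sum>t\<in>{?t k..<?t (Suc k)}. g t)"
    by (intro sum_mono) auto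
  also have "\<dots> = (\<Sum>t\<in>{1..<?t (Suc ?K)}. g t)"
    by (rule sum_over_episodes)
  also have "\<dots> \<le> (\<Sum>t=1..T. g t)"
    using ep_start_le[of Sig T "Suc ?K"] gram.potential_nonneg beta_pos kappa_pos
    by (intro sum_mono2) (auto simp: g_def less_imp_le)
  also have "\<dots> \<le> \<beta> T * (32 * \<beta> T * real CARD('d) * l / \<kappa> + 2 * sqrt (real CARD('d) * real T * l))"
    unfolding g_def l_def by (rule sum_bonus_bound_le)
  finally show ?thesis .
qed

end

lemma Max_card_ge_1:
  fixes R :: "'s::finite \<Rightarrow> 'a::finite \<Rightarrow> 's set"
  assumes "\<And>x y. R x y \<noteq> {}"
  shows "1 \<le> Max (range (\<lambda>(x, y). card (R x y)))"
proof -
  obtain x :: 's and y :: 'a where True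
    by blast
  have "card (R x y) \<le> Max (range (\<lambda>(x, y). card (R x y)))"
    by (rule Max_ge) (auto intro: image_eqI[of _ _ "(x, y)"])
  moreover have "1 \<le> card (R x y)"
    using assms[of x y] by (simp add: Suc_le_eq card_gt_0_iff)
  ultimately show ?thesis
    by simp
qed

lemma num_episodes_0: "num_episodes Sig 0 = 0"
proof -
  have "{k. 1 \<le> k \<and> ep_start Sig 0 k \<le> 0} = {}"
    using ep_start_pos[of Sig 0] by (auto simp: gr0_conv_Suc)
  then show ?thesis
    unfolding num_episodes_def by (simp only: card.empty)
qed

context mnl_run
begin

corollary sum_bonus_le_relaxed:
  assumes eta_pos: "0 < \<eta>"
  shows "(\<Sum>k = 1..num_episodes Sig T. \<Sum>t\<in>{ep_start Sig T k..<ep_start Sig T (Suc k)}.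
      bonus1 R \<phi> \<beta> th Sig (ep_start Sig T k) (s t) (a t))
    \<le> \<beta> T * ((32 * \<beta> T / \<kappa> + 128 * sqrt 2 * L\<phi> * \<eta> / (\<kappa> * sqrt lam)) * real CARD('d)
        * ln (1 + real T * real (Max (range (\<lambda>(x, y). card (R x y)))) * L\<phi>\<^sup>2 / (lam * real CARD('d)))
      + 2 * sqrt (real CARD('d) * real T
        * ln (1 + real T * real (Max (range (\<lambda>(x, y). card (R x y)))) * L\<phi>\<^sup>2 / (lam * real CARD('d)))))"
proof -
  let ?d = "real CARD('d)" and ?U = "real (Max (range (\<lambda>(x, y). card (R x y))))"
  let ?l = "ln (1 + real T * L\<phi>\<^sup>2 / (lam * ?d))"
    and ?l' = "ln (1 + real T * ?U * L\<phi>\<^sup>2 / (lam * ?d))"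
  have "1 \<le> ?U"
    using Max_card_ge_1[of R] R_nonempty by simp
  then have "real T * L\<phi>\<^sup>2 * 1 \<le> real T * L\<phi>\<^sup>2 * ?U"
    by (intro mult_left_mono) auto
  then have l: "0 \<le> ?l" "?l \<le> ?l'"
    using lam_pos by (auto intro!: ln_ge_zero ln_mono divide_right_mono add_pos_nonneg simp: ac_simps)
  let ?E = "128 * sqrt 2 * L\<phi> * \<eta> / (\<kappa> * sqrt lam)"
  have "0 \<le> L\<phi>"
    using A1_phi R_nonempty by (meson all_not_in_conv norm_ge_zero order_trans)
  then have "0 \<le> ?E * ?d * ?l'"
    using eta_pos kappa_pos lam_pos l by (intro mult_nonneg_nonneg divide_nonneg_nonneg) auto
  moreover have "32 * \<beta> T * ?d * ?l / \<kappa> \<le> 32 * \<beta> T * ?d * ?l' / \<kappa>"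
    using l(2) beta_pos kappa_pos by (intro divide_right_mono mult_left_mono) (auto intro: less_imp_le)
  moreover have "sqrt (?d * real T * ?l) \<le> sqrt (?d * real T * ?l')"
    using l by (simp add: mult_left_mono)
  moreover have "(32 * \<beta> T / \<kappa> + ?E) * ?d * ?l' = 32 * \<beta> T * ?d * ?l' / \<kappa> + ?E * ?d * ?l'"
    by (simp add: distrib_right)
  ultimately have "32 * \<beta> T * ?d * ?l / \<kappa> + 2 * sqrt (?d * real T * ?l)
      \<le> (32 * \<beta> T / \<kappa> + ?E) * ?d * ?l' + 2 * sqrt (?d * real T * ?l')"
    by linarith
  then show ?thesis
    using sum_bonus_le beta_pos by (meson less_imp_le mult_left_mono order_trans)
qed

end

theorem lemma19:
  fixes R :: "'s::finite \<Rightarrow> 'a::finite \<Rightarrow> 's set"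
    and \<phi> :: "'s \<Rightarrow> 'a \<Rightarrow> 's \<Rightarrow> real^'d::finite"
    and \<theta>star :: "real^'d"
    and L\<phi> L\<theta> \<kappa> lam \<eta> :: real
    and \<beta> :: "nat \<Rightarrow> real"
    and s :: "nat \<Rightarrow> 's" and a :: "nat \<Rightarrow> 'a"
    and th :: "nat \<Rightarrow> real^'d" and Sig :: "nat \<Rightarrow> real^'d^'d"
    and T :: nat
  assumes A1_phi: "\<forall>x y. \<forall>z\<in>R x y. norm (\<phi> x y z) \<le> L\<phi>"
    and A1_theta: "norm \<theta>star \<le> L\<theta>"
    and A2_kappa: "0 < \<kappa>" "\<kappa> < 1"
    and A2: "\<forall>t\<in>{1..T}. \<forall>\<theta>. norm \<theta> \<le> L\<theta> \<longrightarrow>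
               (\<forall>s'\<in>R (s t) (a t). \<forall>s''\<in>R (s t) (a t).
                  \<kappa> \<le> mnl_prob R \<phi> \<theta> (s t) (a t) s' * mnl_prob R \<phi> \<theta> (s t) (a t) s'')"
    and A3: "\<forall>x y. \<exists>z\<in>R x y. \<phi> x y z = 0"
    and traj: "\<forall>t\<in>{1..T}. s (Suc t) \<in> R (s t) (a t)"
    and eta_pos: "0 < \<eta>"
    and lam_pos: "0 < lam"
    and lam_ge: "L\<phi>\<^sup>2 \<le> lam"
    and init_th: "th 1 = 0"
    and init_Sig: "Sig 1 = mat lam"
    and omd_step: "\<forall>t. 1 \<le> t \<and> t < T \<longrightarrow> norm (th (Suc t)) \<le> L\<theta> \<and>
                    (\<forall>\<theta>. norm \<theta> \<le> L\<theta> \<longrightarrow>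
                        omd_obj R \<phi> \<eta> s a th Sig t (th (Suc t)) \<le> omd_obj R \<phi> \<eta> s a th Sig t \<theta>)"
    and Sig_step: "\<forall>t. 1 \<le> t \<and> t < T \<longrightarrow>
                    Sig (Suc t) = Sig t + mnl_hess R \<phi> (th (Suc t)) (s t) (a t)"
    and beta_pos: "\<forall>t. 0 < \<beta> t"
    and beta_mono: "mono \<beta>"
    and conf: "\<forall>t\<in>{1..T}. wnorm (Sig t) (th t - \<theta>star) \<le> \<beta> t"
  shows "(\<Sum>k = 1..num_episodes Sig T.
           \<Sum>t\<in>{ep_start Sig T k..<ep_start Sig T (Suc k)}.
              bonus1 R \<phi> \<beta> th Sig (ep_start Sig T k) (s t) (a t))
         \<le> \<beta> T * ((32 * \<beta> T / \<kappa> + 128 * sqrt 2 * L\<phi> * \<eta> / (\<kappa> * sqrt lam))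
                    * real CARD('d)
                    * ln (1 + real T * real (Max (range (\<lambda>(x, y). card (R x y)))) * L\<phi>\<^sup>2
                              / (lam * real CARD('d)))
                  + 2 * sqrt (real CARD('d) * real T
                    * ln (1 + real T * real (Max (range (\<lambda>(x, y). card (R x y)))) * L\<phi>\<^sup>2
                              / (lam * real CARD('d)))))"
proof (cases "T = 0")
  case True
  then show ?thesis
    by (simp add: num_episodes_0)
next
  case False
  interpret mnl_run R \<phi> \<theta>star L\<phi> L\<theta> \<kappa> lam \<beta> s a th Sig T
    using assms False by unfold_locales auto
  show ?thesis
    using eta_pos by (rule sum_bonus_le_relaxed)
qed

end
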